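(* If $H$ is a Helly $EPT$ graph that is an atom and has exactly $k\geq 4$ cliques, then $H$ has a $k$-gate as an induced subgraph.
   Context: All graphs are finite and simple. An $EPT$ representation of a graph $G$ is a pair $\langle \mathcal{P},T\rangle$ where $T$ is a tree and $\mathcal{P}=(P_v)_{v\in V(G)}$ is a family of subpaths of $T$ such that two distinct vertices $v,w$ are adjacent if and only if $E(P_v)\cap E(P_w)\neq\emptyset$; it is Helly if $(E(P))_{P\in\mathcal{P}}$ has the Helly property (every pairwise intersecting subfamily has nonempty total intersection), and $G$ is Helly $EPT$ if it admits a Helly $EPT$ representation. A clique is a maximal complete set of vertices. A clique $C$ of a connected graph $H$ is a separator if $H-C$ is disconnected; an atom is a connected graph with no clique separator. Gates are defined recursively: (i) every chordless cycle $C_n$ with $n\geq 4$ is a gate; (ii) if $H'$ is a gate, $C$ and $C'$ are disjoint cliques of $H'$, and $P=(v_1,\dots,v_l)$ with $l\geq 2$ is a chordless path vertex-disjoint from $H'$, then the union of $H'$ and $P$ together with all edges between $v_1$ and the vertices of $C$ and all edges between $v_l$ and the vertices of $C'$ is a gate; (iii) there are no other gates. A $k$-gate is a gate with exactly $k$ cliques. *)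

theory Defs
  imports Main
begin

text \<open>Finite simple graphs are given by a vertex set V and an adjacency
  predicate adj; only the values of adj on V matter.\<close>

definition graph :: "'a set \<Rightarrow> ('a \<Rightarrow> 'a \<Rightarrow> bool) \<Rightarrow> bool" where
  "graph V adj \<longleftrightarrow> finite V \<and> (\<forall>x\<in>V. \<forall>y\<in>V. adj x y \<longrightarrow> adj y x)
     \<and> (\<forall>x\<in>V. \<not> adj x x)"

definition complete_set :: "'a set \<Rightarrow> ('a \<Rightarrow> 'a \<Rightarrow> bool) \<Rightarrow> 'a set \<Rightarrow> bool" where
  "complete_set V adj K \<longleftrightarrow> K \<subseteq> V \<and> (\<forall>x\<in>K. \<forall>y\<in>K. x \<noteq> y \<longrightarrow> adj x y)"

definition cliques :: "'a set \<Rightarrow> ('a \<Rightarrow> 'a \<Rightarrow> bool) \<Rightarrow> 'a set set" where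
  "cliques V adj = {K. complete_set V adj K \<and>
      (\<forall>K'. complete_set V adj K' \<and> K \<subseteq> K' \<longrightarrow> K' = K)}"

definition connected_graph :: "'a set \<Rightarrow> ('a \<Rightarrow> 'a \<Rightarrow> bool) \<Rightarrow> bool" where
  "connected_graph V adj \<longleftrightarrow> V \<noteq> {} \<and>
     (\<forall>x\<in>V. \<forall>y\<in>V. (\<lambda>a b. a \<in> V \<and> b \<in> V \<and> adj a b)\<^sup>*\<^sup>* x y)"

definition clique_separator :: "'a set \<Rightarrow> ('a \<Rightarrow> 'a \<Rightarrow> bool) \<Rightarrow> 'a set \<Rightarrow> bool" where
  "clique_separator V adj C \<longleftrightarrow> C \<in> cliques V adj \<and> V - C \<noteq> {}
      \<and> \<not> connected_graph (V - C) adj"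

definition atom :: "'a set \<Rightarrow> ('a \<Rightarrow> 'a \<Rightarrow> bool) \<Rightarrow> bool" where
  "atom V adj \<longleftrightarrow> connected_graph V adj \<and> (\<forall>C. \<not> clique_separator V adj C)"

definition list_adj :: "'a list \<Rightarrow> 'a \<Rightarrow> 'a \<Rightarrow> bool" where
  "list_adj ps x y \<longleftrightarrow> (\<exists>i. Suc i < length ps \<and> {x, y} = {ps ! i, ps ! Suc i})"

definition cycle_adj :: "'a list \<Rightarrow> 'a \<Rightarrow> 'a \<Rightarrow> bool" where
  "cycle_adj xs x y \<longleftrightarrow>
     (\<exists>i < length xs. {x, y} = {xs ! i, xs ! ((Suc i) mod length xs)})"

definition is_path :: "'b set \<Rightarrow> ('b \<Rightarrow> 'b \<Rightarrow> bool) \<Rightarrow> 'b list \<Rightarrow> bool" where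
  "is_path VT adjT ps \<longleftrightarrow> ps \<noteq> [] \<and> distinct ps \<and> set ps \<subseteq> VT \<and>
     (\<forall>i. Suc i < length ps \<longrightarrow> adjT (ps ! i) (ps ! Suc i))"

definition path_edges :: "'b list \<Rightarrow> 'b set set" where
  "path_edges ps = {{ps ! i, ps ! Suc i} | i. Suc i < length ps}"

definition is_tree :: "'b set \<Rightarrow> ('b \<Rightarrow> 'b \<Rightarrow> bool) \<Rightarrow> bool" where
  "is_tree VT adjT \<longleftrightarrow> graph VT adjT \<and> connected_graph VT adjT \<and>
     \<not> (\<exists>xs. distinct xs \<and> 3 \<le> length xs \<and> set xs \<subseteq> VT \<and>
          (\<forall>i < length xs. adjT (xs ! i) (xs ! ((Suc i) mod length xs))))"

definition ept_rep :: "'a set \<Rightarrow> ('a \<Rightarrow> 'a \<Rightarrow> bool) \<Rightarrow> 'b set \<Rightarrow> ('b \<Rightarrow> 'b \<Rightarrow> bool)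
    \<Rightarrow> ('a \<Rightarrow> 'b list) \<Rightarrow> bool" where
  "ept_rep V adj VT adjT P \<longleftrightarrow> is_tree VT adjT \<and> (\<forall>v\<in>V. is_path VT adjT (P v)) \<and>
     (\<forall>v\<in>V. \<forall>w\<in>V. v \<noteq> w \<longrightarrow> (adj v w \<longleftrightarrow> path_edges (P v) \<inter> path_edges (P w) \<noteq> {}))"

definition helly_rep :: "'a set \<Rightarrow> ('a \<Rightarrow> 'b list) \<Rightarrow> bool" where
  "helly_rep V P \<longleftrightarrow> (\<forall>S \<subseteq> V. S \<noteq> {} \<longrightarrow>
     (\<forall>v\<in>S. \<forall>w\<in>S. path_edges (P v) \<inter> path_edges (P w) \<noteq> {}) \<longrightarrow>
     (\<Inter>v\<in>S. path_edges (P v)) \<noteq> {})"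

text \<open>Helly EPT graph; host trees are taken on vertex type nat (every finite
  tree is isomorphic to one on nat).\<close>
definition helly_ept :: "'a set \<Rightarrow> ('a \<Rightarrow> 'a \<Rightarrow> bool) \<Rightarrow> bool" where
  "helly_ept V adj \<longleftrightarrow> (\<exists>(VT :: nat set) adjT P. ept_rep V adj VT adjT P \<and> helly_rep V P)"

text \<open>Gates (recursive definition). adj is interpreted only on V.\<close>
inductive gate :: "'a set \<Rightarrow> ('a \<Rightarrow> 'a \<Rightarrow> bool) \<Rightarrow> bool" where
  cycle: "\<lbrakk> distinct xs; 4 \<le> length xs; V = set xs;
            \<forall>x\<in>V. \<forall>y\<in>V. adj x y \<longleftrightarrow> cycle_adj xs x y \<rbrakk> \<Longrightarrow> gate V adj"
| extend: "\<lbrakk> gate V' adj; C \<in> cliques V' adj; C' \<in> cliques V' adj; C \<inter> C' = {};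
             distinct ps; 2 \<le> length ps; set ps \<inter> V' = {}; V = V' \<union> set ps;
             \<forall>x\<in>V. \<forall>y\<in>V. (x \<in> set ps \<or> y \<in> set ps) \<longrightarrow>
               (adj x y \<longleftrightarrow> list_adj ps x y
                  \<or> (x = hd ps \<and> y \<in> C) \<or> (y = hd ps \<and> x \<in> C)
                  \<or> (x = last ps \<and> y \<in> C') \<or> (y = last ps \<and> x \<in> C')) \<rbrakk>
           \<Longrightarrow> gate V adj"

definition k_gate :: "nat \<Rightarrow> 'a set \<Rightarrow> ('a \<Rightarrow> 'a \<Rightarrow> bool) \<Rightarrow> bool" where
  "k_gate k V adj \<longleftrightarrow> gate V adj \<and> card (cliques V adj) = k"

end

theory Submission
  imports Defs "HOL-Library.Transitive_Closure_Table"
begin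

text \<open>In a Helly EPT representation every clique is the set of vertices whose paths use one
  fixed tree edge. If a vertex lay in three cliques, their edges would appear along its path and
  the edge of the middle clique would separate the other two in the tree; but the vertices outside
  the middle clique avoid that edge, and as no clique separates the atom they connect the other
  two. So every vertex lies in at most two cliques, and the vertices lying in two cliques form the
  edges of a multigraph on the cliques. This multigraph is triangle-free and 2-connected, hence has
  an open ear decomposition starting with a cycle of length at least 4 whose ears join
  non-adjacent nodes (an ear between adjacent nodes subdivides their edge instead). One vertex per
  edge of the decomposition induces its line graph: the cycle becomes a chordless cycle and each
  ear a path attached to the disjoint cliques of its two ends, which is the recursive definition
  of a gate; its cliques are the stars of the k nodes.\<close>

section \<open>Cliques\<close>

lemma graph_irrefl: "graph V adj \<Longrightarrow> x \<in> V \<Longrightarrow> \<not> adj x x"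
  by (auto simp: graph_def)

lemma graph_sym: "graph V adj \<Longrightarrow> x \<in> V \<Longrightarrow> y \<in> V \<Longrightarrow> adj x y \<Longrightarrow> adj y x"
  by (auto simp: graph_def)

lemma complete_set_subset_clique:
  assumes "finite V" and "complete_set V adj X"
  obtains K where "K \<in> cliques V adj" and "X \<subseteq> K"
proof -
  let ?A = "{Y. complete_set V adj Y \<and> X \<subseteq> Y}"
  have "finite ?A"
    by (rule finite_subset[of _ "Pow V"]) (auto simp: complete_set_def assms(1))
  then obtain K where K: "K \<in> ?A" "\<forall>Y\<in>?A. K \<subseteq> Y \<longrightarrow> K = Y"
    using finite_has_maximal2[of ?A X] assms(2) by auto
  then have "K \<in> cliques V adj"
    unfolding cliques_def by auto
  then show ?thesis
    using that K(1) by blast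
qed

lemma clique_adj: "K \<in> cliques V adj \<Longrightarrow> u \<in> K \<Longrightarrow> w \<in> K \<Longrightarrow> u \<noteq> w \<Longrightarrow> adj u w"
  by (auto simp: cliques_def complete_set_def)

lemma clique_subset: "K \<in> cliques V adj \<Longrightarrow> K \<subseteq> V"
  by (auto simp: cliques_def complete_set_def)

lemma clique_not_subset:
  assumes "K \<in> cliques V adj" and "A \<in> cliques V adj" and "A \<noteq> K"
  obtains x where "x \<in> A" and "x \<notin> K"
  using assms by (auto simp: cliques_def)

lemma clique_nonempty:
  assumes "K \<in> cliques V adj" and "v \<in> V"
  shows "K \<noteq> {}"
proof
  assume "K = {}"
  moreover have "complete_set V adj {v}"
    using \<open>v \<in> V\<close> by (auto simp: complete_set_def)
  ultimately show False
    using assms(1) by (auto simp: cliques_def)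
qed

lemma finite_cliques: "finite V \<Longrightarrow> finite (cliques V adj)"
  by (rule finite_subset[of _ "Pow V"]) (auto simp: cliques_def complete_set_def)

section \<open>Paths and cycles given as lists\<close>

lemma path_edges_Nil [simp]: "path_edges [] = {}"
  by (simp add: path_edges_def)

lemma path_edges_singleton [simp]: "path_edges [x] = {}"
  by (simp add: path_edges_def)

lemma path_edges_Cons_Cons [simp]:
  "path_edges (x # y # xs) = insert {x, y} (path_edges (y # xs))"
  unfolding path_edges_def
proof (intro set_eqI iffI)
  fix e assume "e \<in> {{(x # y # xs) ! i, (x # y # xs) ! Suc i} |i. Suc i < length (x # y # xs)}"
  then obtain i where "Suc i < length (x # y # xs)" "e = {(x # y # xs) ! i, (x # y # xs) ! Suc i}"
    by blast
  then show "e \<in> insert {x, y} {{(y # xs) ! i, (y # xs) ! Suc i} |i. Suc i < length (y # xs)}"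
    by (cases i) auto
next
  fix e assume "e \<in> insert {x, y} {{(y # xs) ! i, (y # xs) ! Suc i} |i. Suc i < length (y # xs)}"
  then show "e \<in> {{(x # y # xs) ! i, (x # y # xs) ! Suc i} |i. Suc i < length (x # y # xs)}"
    by (auto intro: exI[of _ 0] exI[of _ "Suc _"])
qed

lemma list_adj_in_set: "list_adj ps x y \<Longrightarrow> x \<in> set ps \<and> y \<in> set ps"
  by (auto simp: list_adj_def doubleton_eq_iff)

lemma path_edges_append: "path_edges (xs @ y # ys) = path_edges (xs @ [y]) \<union> path_edges (y # ys)"
  by (induction xs rule: induct_list012) auto

lemma path_edge_subset: "e \<in> path_edges xs \<Longrightarrow> e \<subseteq> set xs"
  by (auto simp: path_edges_def)

lemma path_edges_split:
  "{a, b} \<in> path_edges xs \<Longrightarrow> \<exists>ys zs. xs = ys @ a # b # zs \<or> xs = ys @ b # a # zs"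
proof (induction xs rule: induct_list012)
  case (3 x y zs)
  show ?case
  proof (cases "{a, b} = {x, y}")
    case True
    then show ?thesis
      by (auto simp: doubleton_eq_iff intro: exI[of _ "[]"])
  next
    case False
    then obtain ys zs' where "y # zs = ys @ a # b # zs' \<or> y # zs = ys @ b # a # zs'"
      using 3 by auto
    then show ?thesis
      by (metis append_Cons)
  qed
qed auto

lemma successively_path_edges:
  "successively R xs \<Longrightarrow> e \<in> path_edges xs \<Longrightarrow> \<exists>a b. e = {a, b} \<and> R a b"
  by (auto simp: path_edges_def dest: successively_nth)

lemma path_edges_meet_interior:
  "zs \<noteq> [] \<Longrightarrow> e \<in> path_edges (x # zs @ [y]) \<Longrightarrow> e \<inter> set zs \<noteq> {}"
proof (induction zs arbitrary: x)
  case (Cons z zs)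
  then show ?case
    by (cases "e = {x, z}"; cases zs) auto
qed simp

lemma path_edges_subdivide:
  assumes "ds \<noteq> []"
  shows "path_edges (xs @ a # ds @ b # ys)
    \<subseteq> path_edges (xs @ a # b # ys) \<union> {e. e \<inter> set ds \<noteq> {}}"
proof -
  have "path_edges (xs @ a # ds @ b # ys)
      = path_edges (xs @ [a]) \<union> path_edges (a # ds @ [b]) \<union> path_edges (b # ys)"
    using path_edges_append[of xs a "ds @ b # ys"] path_edges_append[of "a # ds" b ys]
    by (simp add: Un_assoc)
  moreover have "path_edges (xs @ a # b # ys)
      = path_edges (xs @ [a]) \<union> {{a, b}} \<union> path_edges (b # ys)"
    using path_edges_append[of xs a "b # ys"] by auto
  ultimately show ?thesis
    using path_edges_meet_interior[OF assms, of _ a b] by blast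
qed

lemma distinct_path_edge_eq_iff:
  "distinct ns \<Longrightarrow> Suc p < length ns \<Longrightarrow> Suc q < length ns \<Longrightarrow>
    {ns ! p, ns ! Suc p} = {ns ! q, ns ! Suc q} \<longleftrightarrow> p = q"
  by (auto simp: doubleton_eq_iff nth_eq_iff_index_eq)

lemma distinct_path_edges_meet_iff:
  "distinct ns \<Longrightarrow> Suc p < length ns \<Longrightarrow> Suc q < length ns \<Longrightarrow> p \<noteq> q \<Longrightarrow>
    {ns ! p, ns ! Suc p} \<inter> {ns ! q, ns ! Suc q} \<noteq> {} \<longleftrightarrow> q = Suc p \<or> p = Suc q"
  by (auto simp: nth_eq_iff_index_eq)

lemma list_adj_nth_iff:
  assumes "distinct ps" and "p < length ps" and "q < length ps"
  shows "list_adj ps (ps ! p) (ps ! q) \<longleftrightarrow> q = Suc p \<or> p = Suc q"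
proof -
  have "list_adj ps (ps ! p) (ps ! q)
      \<longleftrightarrow> (\<exists>i. Suc i < length ps \<and> (p = i \<and> q = Suc i \<or> p = Suc i \<and> q = i))"
    using assms by (auto simp: list_adj_def doubleton_eq_iff nth_eq_iff_index_eq)
  then show ?thesis
    using assms by auto
qed

lemma distinct_interior_two_path_edges:
  assumes "distinct ns" and "0 < i" and "Suc i < length ns"
  shows "\<exists>e1\<in>path_edges ns. \<exists>e2\<in>path_edges ns. e1 \<noteq> e2 \<and> ns ! i \<in> e1 \<and> ns ! i \<in> e2"
proof -
  obtain j where i: "i = Suc j"
    using assms(2) by (cases i) auto
  let ?e1 = "{ns ! j, ns ! Suc j}" and ?e2 = "{ns ! Suc j, ns ! Suc (Suc j)}"
  have e1: "?e1 \<in> path_edges ns" and e2: "?e2 \<in> path_edges ns"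
    using assms(3) i by (auto simp: path_edges_def)
  have ne: "?e1 \<noteq> ?e2"
    using distinct_path_edge_eq_iff[OF assms(1), of j "Suc j"] assms(3) i by simp
  show ?thesis
    unfolding i by (rule bexI[OF _ e1], rule bexI[OF _ e2]) (use ne in simp)
qed

definition cycle_edge :: "'a list \<Rightarrow> nat \<Rightarrow> 'a set" where
  "cycle_edge xs i = {xs ! i, xs ! (Suc i mod length xs)}"

lemma Suc_mod_if: "p < n \<Longrightarrow> Suc p mod n = (if Suc p = n then 0 else Suc p)"
  by (cases "Suc p = n") auto

lemma cycle_edge_eq_iff:
  assumes "distinct cs" and "3 \<le> length cs" and "p < length cs" and "q < length cs"
  shows "cycle_edge cs p = cycle_edge cs q \<longleftrightarrow> p = q"
proof
  let ?n = "length cs"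
  have nth_eq: "cs ! i = cs ! j \<longleftrightarrow> i = j" if "i < ?n" "j < ?n" for i j
    using assms(1) that by (simp add: nth_eq_iff_index_eq)
  have mod_lt: "Suc i mod ?n < ?n" for i
    using assms(2) by (intro mod_less_divisor) auto
  assume "cycle_edge cs p = cycle_edge cs q"
  then have "p = q \<or> p = Suc q mod ?n \<and> Suc p mod ?n = q"
    using assms(2-4) by (auto simp: cycle_edge_def doubleton_eq_iff nth_eq mod_lt)
  then show "p = q"
    using assms(2-4) by (auto simp: Suc_mod_if split: if_splits)
qed simp

lemma cycle_edges_meet_iff:
  assumes "distinct cs" and "3 \<le> length cs" and "p < length cs" and "q < length cs" and "p \<noteq> q"
  shows "cycle_edge cs p \<inter> cycle_edge cs q \<noteq> {}
    \<longleftrightarrow> q = Suc p mod length cs \<or> p = Suc q mod length cs"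
proof -
  let ?n = "length cs"
  have nth_eq: "cs ! i = cs ! j \<longleftrightarrow> i = j" if "i < ?n" "j < ?n" for i j
    using assms(1) that by (simp add: nth_eq_iff_index_eq)
  have mod_lt: "Suc i mod ?n < ?n" for i
    using assms(2) by (intro mod_less_divisor) auto
  have "Suc p mod ?n \<noteq> Suc q mod ?n"
    using assms(3-5) by (auto simp: Suc_mod_if split: if_splits)
  then show ?thesis
    using assms(3-5) by (auto simp: cycle_edge_def nth_eq mod_lt)
qed

lemma cycle_adj_nth_iff:
  assumes "distinct xs" and "p < length xs" and "q < length xs"
  shows "cycle_adj xs (xs ! p) (xs ! q) \<longleftrightarrow> q = Suc p mod length xs \<or> p = Suc q mod length xs"
proof -
  let ?n = "length xs"
  have nth_eq: "xs ! i = xs ! j \<longleftrightarrow> i = j" if "i < ?n" "j < ?n" for i j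
    using assms(1) that by (simp add: nth_eq_iff_index_eq)
  have mod_lt: "Suc i mod ?n < ?n" for i
    using assms(2) by (intro mod_less_divisor) auto
  have "cycle_adj xs (xs ! p) (xs ! q)
      \<longleftrightarrow> (\<exists>i<?n. p = i \<and> q = Suc i mod ?n \<or> p = Suc i mod ?n \<and> q = i)"
    using assms(2,3) by (auto simp: cycle_adj_def doubleton_eq_iff nth_eq mod_lt)
  then show ?thesis
    using assms(2,3) by auto
qed

lemma path_edges_closed_cycle:
  assumes "cs \<noteq> []"
  shows "path_edges (cs @ [hd cs]) = cycle_edge cs ` {..<length cs}"
proof -
  let ?c = "cs @ [hd cs]"
  have "path_edges ?c = (\<lambda>i. {?c ! i, ?c ! Suc i}) ` {..<length cs}"
    by (auto simp: path_edges_def)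
  also have "\<dots> = cycle_edge cs ` {..<length cs}"
  proof (rule image_cong)
    fix i assume "i \<in> {..<length cs}"
    then show "{?c ! i, ?c ! Suc i} = cycle_edge cs i"
      using assms by (auto simp: cycle_edge_def nth_append Suc_mod_if hd_conv_nth)
  qed simp
  finally show ?thesis .
qed

lemma cycle_node_two_edges:
  assumes "distinct cs" and "3 \<le> length cs" and "x \<in> set cs"
  shows "\<exists>e1\<in>cycle_edge cs ` {..<length cs}. \<exists>e2\<in>cycle_edge cs ` {..<length cs}.
    e1 \<noteq> e2 \<and> x \<in> e1 \<and> x \<in> e2"
proof -
  let ?n = "length cs"
  obtain i where i: "i < ?n" "x = cs ! i"
    using assms(3) by (auto simp: in_set_conv_nth)
  define j where "j = (if i = 0 then ?n - 1 else i - 1)"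
  have j: "j < ?n" "j \<noteq> i" "Suc j mod ?n = i"
    using i assms(2) by (auto simp: j_def Suc_mod_if)
  have ne: "cycle_edge cs i \<noteq> cycle_edge cs j"
    using cycle_edge_eq_iff[OF assms(1,2) i(1) j(1)] j(2) by simp
  have "x \<in> cycle_edge cs i" "x \<in> cycle_edge cs j"
    using i j by (auto simp: cycle_edge_def)
  then show ?thesis
    by (intro bexI[of _ "cycle_edge cs i"] bexI[of _ "cycle_edge cs j"] conjI ne imageI)
      (use i(1) j(1) in auto)
qed

section \<open>Deleting an edge of a tree\<close>

definition delete_edge :: "'b set \<Rightarrow> ('b \<Rightarrow> 'b \<Rightarrow> bool) \<Rightarrow> 'b set \<Rightarrow> 'b \<Rightarrow> 'b \<Rightarrow> bool" where
  "delete_edge VT adjT e x y \<longleftrightarrow> x \<in> VT \<and> y \<in> VT \<and> adjT x y \<and> {x, y} \<noteq> e"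

lemma symp_delete_edge: "graph VT adjT \<Longrightarrow> symp (delete_edge VT adjT e)"
  by (auto simp: symp_def delete_edge_def graph_def insert_commute)

lemma rtrancl_path_successively:
  "rtrancl_path r x xs y \<Longrightarrow> successively r (x # xs) \<and> last (x # xs) = y"
  by (induction rule: rtrancl_path.induct) (auto simp: successively_Cons)

lemma tree_no_closed_walk:
  assumes tree: "is_tree VT adjT" and walk: "successively adjT cyc" and "set cyc \<subseteq> VT"
    and "distinct cyc" and "3 \<le> length cyc" and closing: "adjT (last cyc) (hd cyc)"
  shows False
proof -
  have "adjT (cyc ! i) (cyc ! (Suc i mod length cyc))" if "i < length cyc" for i
  proof (cases "Suc i < length cyc")
    case True
    then show ?thesis
      using successively_nth[OF walk True] by simp
  next
    case False
    then have "Suc i = length cyc"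
      using that by simp
    then have "i = length cyc - 1" "Suc i mod length cyc = 0" "cyc \<noteq> []"
      by auto
    then have "cyc ! i = last cyc" "cyc ! (Suc i mod length cyc) = hd cyc"
      by (simp_all add: last_conv_nth hd_conv_nth)
    then show ?thesis
      using closing by simp
  qed
  then show False
    using tree assms(3-5) by (auto simp: is_tree_def)
qed

lemma tree_delete_edge_disconnects:
  assumes tree: "is_tree VT adjT" and xy: "x \<in> VT" "y \<in> VT" "adjT x y"
  shows "\<not> (delete_edge VT adjT {x, y})\<^sup>*\<^sup>* x y"
proof
  let ?R = "delete_edge VT adjT {x, y}"
  have graph: "graph VT adjT"
    using tree by (simp add: is_tree_def)
  assume "?R\<^sup>*\<^sup>* x y"
  then obtain xs where "rtrancl_path ?R x xs y"
    by (auto simp: rtranclp_eq_rtrancl_path)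
  then obtain xs' where xs': "rtrancl_path ?R x xs' y" "distinct (x # xs')"
    by (rule rtrancl_path_distinct)
  define cyc where "cyc = x # xs'"
  have walk: "successively ?R cyc" and last: "last cyc = y"
    using rtrancl_path_successively[OF xs'(1)] by (auto simp: cyc_def)
  have "x \<noteq> y"
    using graph_irrefl[OF graph xy(1)] xy(3) by auto
  then have "xs' \<noteq> []"
    using last by (auto simp: cyc_def)
  have xs'_VT: "z \<in> VT" if "z \<in> set xs'" for z
    using rtrancl_path_Range[OF xs'(1) that] by (auto simp: delete_edge_def)
  have "3 \<le> length cyc"
  proof (rule ccontr)
    assume "\<not> 3 \<le> length cyc"
    then have "length xs' = 1"
      using \<open>xs' \<noteq> []\<close> by (cases xs') (auto simp: cyc_def Suc_le_eq)
    then obtain z where "xs' = [z]"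
      by (auto simp: length_Suc_conv)
    then show False
      using walk last by (auto simp: cyc_def delete_edge_def)
  qed
  moreover have "set cyc \<subseteq> VT"
    using xy(1) xs'_VT by (auto simp: cyc_def)
  moreover have "successively adjT cyc"
    using walk by (rule successively_mono) (simp add: delete_edge_def)
  moreover have "adjT (last cyc) (hd cyc)"
    using last graph_sym[OF graph xy] by (simp add: cyc_def)
  moreover have "distinct cyc"
    using xs'(2) by (simp add: cyc_def)
  ultimately show False
    using tree_no_closed_walk[OF tree] by blast
qed

lemma path_segment_delete_edge:
  assumes "is_path VT adjT ps" and "i \<le> j" and "j < length ps"
    and "\<forall>l. i \<le> l \<longrightarrow> l < j \<longrightarrow> {ps ! l, ps ! Suc l} \<noteq> e"
  shows "(delete_edge VT adjT e)\<^sup>*\<^sup>* (ps ! i) (ps ! j)"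
  using assms(2-4)
proof (induction j)
  case (Suc j)
  show ?case
  proof (cases "i = Suc j")
    case False
    then have "(delete_edge VT adjT e)\<^sup>*\<^sup>* (ps ! i) (ps ! j)"
      using Suc by auto
    moreover have "delete_edge VT adjT e (ps ! j) (ps ! Suc j)"
      using assms(1) Suc.prems False by (auto simp: is_path_def delete_edge_def)
    ultimately show ?thesis
      by (rule rtranclp.rtrancl_into_rtrancl)
  qed simp
qed simp

lemma path_avoiding_edge_connected:
  assumes graph: "graph VT adjT" and path: "is_path VT adjT ps" and avoid: "e \<notin> path_edges ps"
    and "x \<in> set ps" and "y \<in> set ps"
  shows "(delete_edge VT adjT e)\<^sup>*\<^sup>* x y"
proof -
  let ?R = "delete_edge VT adjT e"
  have from_hd: "?R\<^sup>*\<^sup>* (ps ! 0) z" if z: "z \<in> set ps" for z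
  proof -
    obtain k where k: "k < length ps" "z = ps ! k"
      using z by (auto simp: in_set_conv_nth)
    have "\<forall>l. 0 \<le> l \<longrightarrow> l < k \<longrightarrow> {ps ! l, ps ! Suc l} \<noteq> e"
      using avoid k(1) by (auto simp: path_edges_def)
    then show ?thesis
      using path_segment_delete_edge[OF path _ k(1)] k(2) by simp
  qed
  have "?R\<^sup>*\<^sup>* x (ps ! 0)"
    using from_hd[OF assms(4)] sympD[OF symp_rtranclp[OF symp_delete_edge[OF graph]]] by blast
  then show ?thesis
    using from_hd[OF assms(5)] by (rule rtranclp_trans)
qed

section \<open>Helly EPT atoms\<close>

lemma three_increasing_elements:
  assumes "3 \<le> card (S :: nat set)"
  obtains a b c where "a \<in> S" "b \<in> S" "c \<in> S" "a < b" "b < c"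
proof -
  have "finite S"
    using assms by (metis card.infinite not_numeral_le_zero)
  then obtain l where l: "sorted_wrt (<) l" "set l = S" "length l = card S"
    using sorted_list_of_set.finite_set_strict_sorted by blast
  then show ?thesis
    using that[of "l ! 0" "l ! 1" "l ! 2"] assms
    by (auto simp: sorted_wrt_nth_less)
qed

definition cliques_of :: "'a set \<Rightarrow> ('a \<Rightarrow> 'a \<Rightarrow> bool) \<Rightarrow> 'a \<Rightarrow> 'a set set" where
  "cliques_of V adj v = {K \<in> cliques V adj. v \<in> K}"

locale helly_ept_atom =
  fixes V :: "'a set" and adj :: "'a \<Rightarrow> 'a \<Rightarrow> bool"
    and VT :: "'b set" and adjT :: "'b \<Rightarrow> 'b \<Rightarrow> bool" and P :: "'a \<Rightarrow> 'b list"
  assumes graph: "graph V adj" and rep: "ept_rep V adj VT adjT P" and helly: "helly_rep V P"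
    and atom: "atom V adj" and two_cliques: "2 \<le> card (cliques V adj)"
begin

lemma host_tree: "is_tree VT adjT"
  using rep by (simp add: ept_rep_def)

lemma host_tree_graph: "graph VT adjT"
  using host_tree by (simp add: is_tree_def)

lemma vertex_path: "v \<in> V \<Longrightarrow> is_path VT adjT (P v)"
  using rep by (simp add: ept_rep_def)

lemma adj_iff_share_edge:
  "v \<in> V \<Longrightarrow> w \<in> V \<Longrightarrow> v \<noteq> w \<Longrightarrow> adj v w \<longleftrightarrow> path_edges (P v) \<inter> path_edges (P w) \<noteq> {}"
  using rep by (simp add: ept_rep_def)

lemma atom_connected: "connected_graph V adj"
  using atom by (simp add: atom_def)

lemma path_edges_nonempty:
  assumes v: "v \<in> V"
  shows "path_edges (P v) \<noteq> {}"
proof -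
  obtain K1 K2 where K: "K1 \<in> cliques V adj" "K2 \<in> cliques V adj" "K1 \<noteq> K2"
    using two_cliques by (metis card_le_Suc0_iff_eq not_less_eq_eq numeral_2_eq_2 card.infinite
        zero_le)
  have "\<exists>u\<in>V. u \<noteq> v"
  proof (rule ccontr)
    assume "\<not> (\<exists>u\<in>V. u \<noteq> v)"
    then have "V \<subseteq> {v}"
      by auto
    then have "K1 = {v}" "K2 = {v}"
      using clique_subset[OF K(1)] clique_subset[OF K(2)]
        clique_nonempty[OF K(1) v] clique_nonempty[OF K(2) v] by blast+
    then show False
      using K(3) by simp
  qed
  then obtain u where u: "u \<in> V" "u \<noteq> v"
    by blast
  have "(\<lambda>a b. a \<in> V \<and> b \<in> V \<and> adj a b)\<^sup>*\<^sup>* v u"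
    using atom_connected v u by (auto simp: connected_graph_def)
  then obtain w where w: "w \<in> V" "adj v w"
    using u(2) by (cases rule: converse_rtranclpE) auto
  moreover have "v \<noteq> w"
    using graph_irrefl[OF graph v] w by auto
  ultimately show ?thesis
    using adj_iff_share_edge[OF v] by auto
qed

text \<open>The Helly property puts the paths of a clique on a common tree edge; maximality of
  the clique makes this edge characteristic for it.\<close>

lemma clique_tree_edge:
  assumes K: "K \<in> cliques V adj"
  obtains e where "\<forall>v\<in>V. v \<in> K \<longleftrightarrow> e \<in> path_edges (P v)"
proof -
  have KV: "K \<subseteq> V"
    using clique_subset[OF K] .
  have "V \<noteq> {}"
    using atom_connected by (simp add: connected_graph_def)
  then have "K \<noteq> {}"
    using clique_nonempty[OF K] by auto
  moreover have "path_edges (P v) \<inter> path_edges (P w) \<noteq> {}" if "v \<in> K" "w \<in> K" for v w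
  proof (cases "v = w")
    case True
    then show ?thesis
      using that KV path_edges_nonempty by auto
  next
    case False
    then show ?thesis
      using that KV adj_iff_share_edge[of v w] clique_adj[OF K that] by auto
  qed
  ultimately have "(\<Inter>v\<in>K. path_edges (P v)) \<noteq> {}"
    using helly KV unfolding helly_rep_def by simp
  then obtain e where e: "\<forall>v\<in>K. e \<in> path_edges (P v)"
    by blast
  let ?K' = "{w \<in> V. e \<in> path_edges (P w)}"
  have "complete_set V adj ?K'"
    using adj_iff_share_edge by (auto simp: complete_set_def)
  moreover have "K \<subseteq> ?K'"
    using e KV by auto
  ultimately have "?K' = K"
    using K by (auto simp: cliques_def)
  then show ?thesis
    using that by auto
qed

lemma outside_clique_connected:
  assumes e: "\<forall>v\<in>V. v \<in> K \<longleftrightarrow> e \<in> path_edges (P v)"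
    and walk: "(\<lambda>a b. a \<in> V - K \<and> b \<in> V - K \<and> adj a b)\<^sup>*\<^sup>* u w" and u: "u \<in> V - K"
    and a: "a \<in> set (P u)" and b: "b \<in> set (P w)"
  shows "(delete_edge VT adjT e)\<^sup>*\<^sup>* a b"
  using walk b
proof (induction arbitrary: b rule: rtranclp_induct)
  case base
  then show ?case
    using path_avoiding_edge_connected[OF host_tree_graph vertex_path] e u a by auto
next
  case (step w w')
  then have w: "w \<in> V - K" and w': "w' \<in> V - K" and "adj w w'"
    by auto
  then obtain f where f: "f \<in> path_edges (P w)" "f \<in> path_edges (P w')"
    using adj_iff_share_edge graph_irrefl[OF graph] by blast
  then obtain q where "q \<in> f"
    by (auto simp: path_edges_def)
  then have q: "q \<in> set (P w)" "q \<in> set (P w')"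
    using f path_edge_subset by blast+
  have "(delete_edge VT adjT e)\<^sup>*\<^sup>* q b"
    using path_avoiding_edge_connected[OF host_tree_graph vertex_path] e w' q(2) step.prems by auto
  with step.IH[OF q(1)] show ?case
    by (rule rtranclp_trans)
qed

definition clique_at_edge :: "'a \<Rightarrow> 'a set \<Rightarrow> nat \<Rightarrow> bool" where
  "clique_at_edge v X p \<longleftrightarrow> X \<in> cliques V adj \<and> Suc p < length (P v) \<and>
     (\<forall>w\<in>V. w \<in> X \<longleftrightarrow> {P v ! p, P v ! Suc p} \<in> path_edges (P w))"

lemma clique_at_edge_unique:
  "clique_at_edge v X p \<Longrightarrow> clique_at_edge v Y p \<Longrightarrow> X = Y"
  using clique_subset unfolding clique_at_edge_def by blast

lemma clique_at_some_edge:
  assumes "v \<in> V" and "X \<in> cliques_of V adj v"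
  obtains p where "clique_at_edge v X p"
proof -
  obtain e where e: "\<forall>w\<in>V. w \<in> X \<longleftrightarrow> e \<in> path_edges (P w)"
    using clique_tree_edge assms(2) by (auto simp: cliques_of_def)
  then obtain p where "Suc p < length (P v)" "e = {P v ! p, P v ! Suc p}"
    using assms by (auto simp: cliques_of_def path_edges_def)
  then show ?thesis
    using that e assms(2) by (auto simp: clique_at_edge_def cliques_of_def)
qed

text \<open>The tree edge of the middle clique separates the other two edges in the tree, while
  the vertices outside the middle clique connect them avoiding this edge.\<close>

lemma no_three_cliques_along_path:
  assumes v: "v \<in> V" and X1: "clique_at_edge v X1 p1" and X2: "clique_at_edge v X2 p2"
    and X3: "clique_at_edge v X3 p3" and "X1 \<noteq> X2" and "X3 \<noteq> X2" and "p1 < p2" and "p2 < p3"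
  shows False
proof -
  let ?ps = "P v"
  let ?e = "{?ps ! p2, ?ps ! Suc p2}"
  let ?R = "delete_edge VT adjT ?e"
  have ps: "is_path VT adjT ?ps" "distinct ?ps" and p3: "Suc p3 < length ?ps"
    using vertex_path[OF v] X3 by (auto simp: is_path_def clique_at_edge_def)
  have not_e: "{?ps ! l, ?ps ! Suc l} \<noteq> ?e" if "l \<noteq> p2" "Suc l < length ?ps" for l
    using distinct_path_edge_eq_iff[OF ps(2) that(2), of p2] that(1) p3 assms(8) by simp
  have left: "?R\<^sup>*\<^sup>* (?ps ! p1) (?ps ! p2)"
    using path_segment_delete_edge[OF ps(1), of p1 p2] not_e assms(7,8) p3 by simp
  have right: "?R\<^sup>*\<^sup>* (?ps ! Suc p2) (?ps ! p3)"
    using path_segment_delete_edge[OF ps(1), of "Suc p2" p3] not_e assms(8) p3 by simp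
  obtain x where x: "x \<in> X1" "x \<notin> X2"
    using X1 X2 assms(5) clique_not_subset by (metis clique_at_edge_def)
  obtain y where y: "y \<in> X3" "y \<notin> X2"
    using X3 X2 assms(6) clique_not_subset by (metis clique_at_edge_def)
  have xV: "x \<in> V" and yV: "y \<in> V"
    using x y X1 X3 clique_subset by (auto simp: clique_at_edge_def)
  have "\<not> clique_separator V adj X2"
    using atom by (simp add: atom_def)
  then have "connected_graph (V - X2) adj"
    using X2 xV x by (auto simp: clique_separator_def clique_at_edge_def)
  then have walk: "(\<lambda>a b. a \<in> V - X2 \<and> b \<in> V - X2 \<and> adj a b)\<^sup>*\<^sup>* x y"
    using xV x yV y by (auto simp: connected_graph_def)
  have "{?ps ! p1, ?ps ! Suc p1} \<in> path_edges (P x)" "{?ps ! p3, ?ps ! Suc p3} \<in> path_edges (P y)"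
    using X1 X3 x y xV yV by (auto simp: clique_at_edge_def)
  then have "?ps ! p1 \<in> set (P x)" "?ps ! p3 \<in> set (P y)"
    using path_edge_subset by blast+
  then have middle: "?R\<^sup>*\<^sup>* (?ps ! p1) (?ps ! p3)"
    using outside_clique_connected[OF _ walk] X2 xV x by (auto simp: clique_at_edge_def)
  have sym: "symp ?R\<^sup>*\<^sup>*"
    by (rule symp_rtranclp[OF symp_delete_edge[OF host_tree_graph]])
  have "?R\<^sup>*\<^sup>* (?ps ! p2) (?ps ! Suc p2)"
    using sympD[OF sym left] middle sympD[OF sym right] by (meson rtranclp_trans)
  moreover have "?ps ! p2 \<in> VT" "?ps ! Suc p2 \<in> VT" "adjT (?ps ! p2) (?ps ! Suc p2)"
    using ps(1) p3 assms(8) by (auto simp: is_path_def)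
  ultimately show False
    using tree_delete_edge_disconnects[OF host_tree] by blast
qed

lemma card_cliques_of_le_two:
  assumes v: "v \<in> V"
  shows "card (cliques_of V adj v) \<le> 2"
proof (rule ccontr)
  let ?C = "cliques_of V adj v"
  have "\<forall>X\<in>?C. \<exists>p. clique_at_edge v X p"
    using clique_at_some_edge[OF v] by metis
  then obtain pos where pos: "\<forall>X\<in>?C. clique_at_edge v X (pos X)"
    by (metis bchoice)
  have "inj_on pos ?C"
    using pos clique_at_edge_unique by (metis inj_onI)
  moreover assume "\<not> card ?C \<le> 2"
  ultimately have "3 \<le> card (pos ` ?C)"
    by (simp add: card_image)
  then obtain p1 p2 p3 where "p1 \<in> pos ` ?C" "p2 \<in> pos ` ?C" "p3 \<in> pos ` ?C" "p1 < p2" "p2 < p3"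
    by (rule three_increasing_elements)
  then obtain X1 X2 X3 where "X1 \<in> ?C" "X2 \<in> ?C" "X3 \<in> ?C"
    "pos X1 < pos X2" "pos X2 < pos X3"
    by blast
  then show False
    using no_three_cliques_along_path[OF v, of X1 "pos X1" X2 "pos X2" X3 "pos X3"] pos
    by fastforce
qed

end

section \<open>Open ear decompositions\<close>

definition ear_nodes :: "'n list list \<Rightarrow> 'n set" where
  "ear_nodes es = \<Union> (set ` set es)"

definition ear_edges :: "'n list list \<Rightarrow> 'n set set" where
  "ear_edges es = \<Union> (path_edges ` set es)"

definition closed_cycle :: "'n list \<Rightarrow> bool" where
  "closed_cycle c \<longleftrightarrow> (\<exists>cs. c = cs @ [hd cs] \<and> distinct cs \<and> 4 \<le> length cs)"

definition is_ear :: "'n list list \<Rightarrow> 'n list \<Rightarrow> bool" where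
  "is_ear es ns \<longleftrightarrow> 3 \<le> length ns \<and> distinct ns \<and> hd ns \<in> ear_nodes es \<and> last ns \<in> ear_nodes es
     \<and> {hd ns, last ns} \<notin> ear_edges es \<and> set ns \<inter> ear_nodes es \<subseteq> {hd ns, last ns}"

text \<open>The initial cycle (closed by repeating its first vertex) and the ears are vertex lists.
  Ears have an interior vertex and join non-adjacent vertices; this
  makes the line graph of each ear a path whose ends attach to disjoint cliques.\<close>

inductive ear_decomposition :: "'n list list \<Rightarrow> bool" where
  cycle: "closed_cycle c \<Longrightarrow> ear_decomposition [c]"
| ear: "ear_decomposition es \<Longrightarrow> is_ear es ns \<Longrightarrow> ear_decomposition (es @ [ns])"

lemma ear_nodes_simps [simp]:
  "ear_nodes [] = {}" "ear_nodes (ns # es) = set ns \<union> ear_nodes es"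
  "ear_nodes (es @ es') = ear_nodes es \<union> ear_nodes es'"
  by (auto simp: ear_nodes_def)

lemma ear_edges_simps [simp]:
  "ear_edges [] = {}" "ear_edges (ns # es) = path_edges ns \<union> ear_edges es"
  "ear_edges (es @ es') = ear_edges es \<union> ear_edges es'"
  by (auto simp: ear_edges_def)

lemma ear_nodes_update:
  assumes "j < length es" and "set ns = set (es ! j) \<union> D"
  shows "ear_nodes (es[j := ns]) = ear_nodes es \<union> D"
proof -
  have "es = take j es @ es ! j # drop (Suc j) es"
    using assms(1) by (simp add: id_take_nth_drop)
  then have "ear_nodes es = ear_nodes (take j es) \<union> set (es ! j) \<union> ear_nodes (drop (Suc j) es)"
    by (metis ear_nodes_simps(2,3) sup_assoc)
  moreover have "es[j := ns] = take j es @ ns # drop (Suc j) es"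
    using assms(1) by (simp add: upd_conv_take_nth_drop)
  ultimately show ?thesis
    using assms(2) by auto
qed

lemma ear_edges_update:
  assumes "j < length es" and "path_edges ns \<subseteq> path_edges (es ! j) \<union> F"
  shows "ear_edges (es[j := ns]) \<subseteq> ear_edges es \<union> F"
proof -
  have "es = take j es @ es ! j # drop (Suc j) es"
    using assms(1) by (simp add: id_take_nth_drop)
  then have "ear_edges es
      = ear_edges (take j es) \<union> path_edges (es ! j) \<union> ear_edges (drop (Suc j) es)"
    by (metis ear_edges_simps(2,3) sup_assoc)
  moreover have "es[j := ns] = take j es @ ns # drop (Suc j) es"
    using assms(1) by (simp add: upd_conv_take_nth_drop)
  ultimately show ?thesis
    using assms(2) by auto
qed

lemma closed_cycle_subdivide:
  assumes c: "closed_cycle (xs @ a # b # ys)"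
    and ds: "distinct ds" "set ds \<inter> set (xs @ a # b # ys) = {}"
  shows "closed_cycle (xs @ a # ds @ b # ys)"
proof -
  let ?c = "xs @ a # b # ys" and ?d = "xs @ a # ds @ b # ys"
  obtain cs where cs: "?c = cs @ [hd cs]" "distinct cs" "4 \<le> length cs"
    using c by (auto simp: closed_cycle_def)
  define cs' where "cs' = butlast ?d"
  have "butlast ?c = cs"
    by (subst cs(1)) simp
  then have cs_eq: "cs = xs @ a # butlast (b # ys)"
    by (simp add: butlast_append)
  have cs'_eq: "cs' = xs @ a # ds @ butlast (b # ys)"
    by (simp add: cs'_def butlast_append)
  have "last ?d = last ?c"
    by simp
  also have "\<dots> = hd cs"
    by (subst cs(1)) simp
  also have "\<dots> = hd cs'"
    using cs_eq cs'_eq by (simp add: hd_append)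
  finally have last_d: "last ?d = hd cs'" .
  have "?d = butlast ?d @ [last ?d]"
    by (rule append_butlast_last_id[symmetric]) simp
  then have "?d = cs' @ [hd cs']"
    unfolding last_d cs'_def .
  moreover have "set (butlast (b # ys)) \<subseteq> set ?c"
    by (auto dest: in_set_butlastD)
  then have "distinct cs'"
    using cs(2) ds cs_eq cs'_eq by auto
  moreover have "4 \<le> length cs'"
    using cs(3) cs_eq cs'_eq by simp
  ultimately show ?thesis
    by (auto simp: closed_cycle_def)
qed

lemma is_ear_subdivide:
  assumes ear: "is_ear es (xs @ a # b # ys)"
    and ds: "distinct ds" "set ds \<inter> ear_nodes es = {}" "set ds \<inter> set (xs @ a # b # ys) = {}"
  shows "is_ear es (xs @ a # ds @ b # ys)"
proof -
  have "hd (xs @ a # ds @ b # ys) = hd (xs @ a # b # ys)"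
    "last (xs @ a # ds @ b # ys) = last (xs @ a # b # ys)"
    by (simp_all add: hd_append)
  then show ?thesis
    using ear ds by (auto simp: is_ear_def)
qed

lemma is_ear_add_nodes:
  assumes ear: "is_ear es ns" and nodes: "ear_nodes es' = ear_nodes es \<union> D"
    and edges: "ear_edges es' \<subseteq> ear_edges es \<union> {e. e \<inter> D \<noteq> {}}" and "D \<inter> set ns = {}"
  shows "is_ear es' ns"
proof -
  have "ns \<noteq> []"
    using ear by (auto simp: is_ear_def)
  then have "hd ns \<notin> D" "last ns \<notin> D"
    using assms(4) hd_in_set last_in_set by fastforce+
  then have "{hd ns, last ns} \<notin> ear_edges es'"
    using ear edges by (auto simp: is_ear_def)
  then show ?thesis
    using ear nodes assms(4) by (auto simp: is_ear_def)
qed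

lemma ear_decomposition_subdivide:
  assumes "ear_decomposition es" and "j < length es" and "es ! j = xs @ a # b # ys"
    and "ds \<noteq> []" and "distinct ds" and "set ds \<inter> ear_nodes es = {}"
  shows "ear_decomposition (es[j := xs @ a # ds @ b # ys])"
  using assms
proof (induction arbitrary: j rule: ear_decomposition.induct)
  case (cycle c)
  then show ?case
    using closed_cycle_subdivide[of xs a b ys ds] by (simp add: ear_decomposition.cycle)
next
  case (ear es ns)
  let ?new = "xs @ a # ds @ b # ys"
  show ?case
  proof (cases "j < length es")
    case True
    have es_j: "es ! j = xs @ a # b # ys"
      using True ear.prems(2) by (simp add: nth_append)
    have "set ?new = set (es ! j) \<union> set ds"
      using es_j by auto
    then have "ear_nodes (es[j := ?new]) = ear_nodes es \<union> set ds"
      by (rule ear_nodes_update[OF True])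
    moreover have "ear_edges (es[j := ?new]) \<subseteq> ear_edges es \<union> {e. e \<inter> set ds \<noteq> {}}"
      using ear_edges_update[OF True] path_edges_subdivide[OF ear.prems(3), of xs a b ys] es_j
      by simp
    moreover have "set ds \<inter> set ns = {}"
      using ear.prems(5) by auto
    ultimately have "is_ear (es[j := ?new]) ns"
      by (rule is_ear_add_nodes[OF ear.hyps(2)])
    moreover have "(es @ [ns])[j := ?new] = es[j := ?new] @ [ns]"
      using True by (simp add: list_update_append1)
    moreover have "ear_decomposition (es[j := ?new])"
      using ear.IH[OF True es_j ear.prems(3,4)] ear.prems(5) by auto
    ultimately show ?thesis
      by (simp add: ear_decomposition.ear)
  next
    case False
    then have j: "j = length es"
      using ear.prems(1) by simp
    then have "ns = xs @ a # b # ys"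
      using ear.prems(2) by simp
    then show ?thesis
      using is_ear_subdivide[of es xs a b ys ds] ear.hyps ear.prems(4,5) j
      by (auto intro: ear_decomposition.ear)
  qed
qed

lemma ear_decomposition_two_nodes:
  "ear_decomposition es \<Longrightarrow> \<exists>a\<in>ear_nodes es. \<exists>b\<in>ear_nodes es. a \<noteq> b"
proof (induction rule: ear_decomposition.induct)
  case (cycle c)
  obtain cs where cs: "c = cs @ [hd cs]" "distinct cs" "4 \<le> length cs"
    using cycle by (auto simp: closed_cycle_def)
  then have len: "0 < length cs" "1 < length cs"
    by linarith+
  then have "cs ! 0 \<in> set cs" "cs ! 1 \<in> set cs" "cs ! 0 \<noteq> cs ! 1"
    using nth_eq_iff_index_eq[OF cs(2) len] by auto
  then show ?case
    using cs(1) by auto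
qed auto

lemma ear_decomposition_node_two_edges:
  assumes "ear_decomposition es" and "A \<in> ear_nodes es"
  shows "\<exists>e1\<in>ear_edges es. \<exists>e2\<in>ear_edges es. e1 \<noteq> e2 \<and> A \<in> e1 \<and> A \<in> e2"
  using assms
proof (induction rule: ear_decomposition.induct)
  case (cycle c)
  then obtain cs where cs: "c = cs @ [hd cs]" "distinct cs" "4 \<le> length cs"
    by (auto simp: closed_cycle_def)
  then have "cs \<noteq> []"
    by (cases cs) auto
  then have "path_edges c = cycle_edge cs ` {..<length cs}"
    unfolding cs(1) by (rule path_edges_closed_cycle)
  moreover have "A \<in> set cs"
    using cycle.prems cs(1) hd_in_set[OF \<open>cs \<noteq> []\<close>] by auto
  ultimately show ?case
    using cycle_node_two_edges[OF cs(2) _ \<open>A \<in> set cs\<close>] cs(3) by simp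
next
  case (ear es ns)
  show ?case
  proof (cases "A \<in> ear_nodes es")
    case True
    then show ?thesis
      using ear.IH by auto
  next
    case False
    then obtain i where i: "i < length ns" "A = ns ! i"
      using ear.prems by (auto simp: in_set_conv_nth)
    have ear_ns: "is_ear es ns"
      by (fact ear.hyps(2))
    then have ends: "ns \<noteq> []" "hd ns \<in> ear_nodes es" "last ns \<in> ear_nodes es"
      by (auto simp: is_ear_def)
    have "i \<noteq> 0"
      using i False ends by (metis hd_conv_nth)
    moreover have "i \<noteq> length ns - 1"
      using i False ends by (metis last_conv_nth)
    ultimately have "0 < i" "Suc i < length ns"
      using i(1) by auto
    then have "\<exists>e1\<in>path_edges ns. \<exists>e2\<in>path_edges ns. e1 \<noteq> e2 \<and> A \<in> e1 \<and> A \<in> e2"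
      using distinct_interior_two_path_edges[of ns i] ear_ns i(2) by (auto simp: is_ear_def)
    then show ?thesis
      by auto
  qed
qed

lemma ear_decomposition_edges_cover: "ear_decomposition es \<Longrightarrow> \<Union> (ear_edges es) = ear_nodes es"
  using ear_decomposition_node_two_edges
  by (fastforce simp: ear_edges_def ear_nodes_def dest: path_edge_subset)

section \<open>The clique multigraph\<close>

lemma rtranclp_cross_boundary:
  "R\<^sup>*\<^sup>* x y \<Longrightarrow> x \<notin> N \<Longrightarrow> y \<in> N \<Longrightarrow> \<exists>u v. R u v \<and> u \<notin> N \<and> v \<in> N"
  by (induction rule: rtranclp_induct) auto

lemma successively_subdivide:
  assumes "successively R (ys @ a # b # zs)" and "successively R (a # ds @ [b])"
  shows "successively R (ys @ a # ds @ b # zs)"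
proof -
  have "successively R ys" "ys = [] \<or> R (last ys) a" "successively R (b # zs)"
    using assms(1) by (auto simp: successively_append_iff)
  moreover have "successively R (a # ds)" "R (last (a # ds)) b"
    using assms(2) successively_append_iff[of R "a # ds" "[b]"] by auto
  ultimately have "successively R ((a # ds) @ (b # zs))"
    by (simp only: successively_append_iff) simp
  then show ?thesis
    using \<open>successively R ys\<close> \<open>ys = [] \<or> R (last ys) a\<close>
    by (auto simp: successively_append_iff)
qed

locale clique_degree_two_atom =
  fixes V :: "'a set" and adj :: "'a \<Rightarrow> 'a \<Rightarrow> bool"
  assumes graph: "graph V adj" and atom: "atom V adj"
    and degree_two: "\<forall>v\<in>V. card (cliques_of V adj v) \<le> 2"
    and four_cliques: "4 \<le> card (cliques V adj)"
begin

definition linked :: "'a set \<Rightarrow> 'a set \<Rightarrow> bool" where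
  "linked A B \<longleftrightarrow> A \<noteq> B \<and> (\<exists>v\<in>V. cliques_of V adj v = {A, B})"

lemma finite_V: "finite V"
  using graph by (simp add: graph_def)

lemma finite_cliques_V: "finite (cliques V adj)"
  using finite_cliques[OF finite_V] .

lemma cliques_of_eq_pair:
  assumes "v \<in> V" "A \<in> cliques_of V adj v" "B \<in> cliques_of V adj v" "A \<noteq> B"
  shows "cliques_of V adj v = {A, B}"
proof -
  have "finite (cliques_of V adj v)"
    using finite_cliques_V by (simp add: cliques_of_def)
  moreover have "{A, B} \<subseteq> cliques_of V adj v" "card {A, B} = 2"
    using assms by auto
  moreover have "card (cliques_of V adj v) \<le> 2"
    using degree_two assms(1) by blast
  ultimately show ?thesis
    by (metis card_seteq)
qed

lemma adj_iff_common_clique: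
  assumes "x \<in> V" and "y \<in> V"
  shows "adj x y \<longleftrightarrow> x \<noteq> y \<and> cliques_of V adj x \<inter> cliques_of V adj y \<noteq> {}"
proof
  assume xy: "adj x y"
  then have "x \<noteq> y"
    using graph_irrefl[OF graph assms(1)] by auto
  moreover have "complete_set V adj {x, y}"
    using assms xy graph_sym[OF graph] by (auto simp: complete_set_def)
  then obtain K where "K \<in> cliques V adj" "{x, y} \<subseteq> K"
    using complete_set_subset_clique[OF finite_V] by blast
  ultimately show "x \<noteq> y \<and> cliques_of V adj x \<inter> cliques_of V adj y \<noteq> {}"
    by (auto simp: cliques_of_def)
next
  assume xy: "x \<noteq> y \<and> cliques_of V adj x \<inter> cliques_of V adj y \<noteq> {}"
  then obtain K where "K \<in> cliques V adj" "x \<in> K" "y \<in> K"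
    by (auto simp: cliques_of_def)
  then show "adj x y"
    using clique_adj xy by metis
qed

lemma triangle_common_clique:
  assumes "x \<in> V" "y \<in> V" "z \<in> V" "adj x y" "adj y z" "adj x z"
  shows "cliques_of V adj x \<inter> cliques_of V adj y \<inter> cliques_of V adj z \<noteq> {}"
proof -
  have "complete_set V adj {x, y, z}"
    using assms graph_sym[OF graph] by (auto simp: complete_set_def)
  then obtain K where "K \<in> cliques V adj" "{x, y, z} \<subseteq> K"
    using complete_set_subset_clique[OF finite_V] by blast
  then show ?thesis
    by (auto simp: cliques_of_def)
qed

lemma linked_sym: "linked A B \<longleftrightarrow> linked B A"
  by (auto simp: linked_def insert_commute)

lemma linked_cliques: "linked A B \<Longrightarrow> A \<in> cliques V adj \<and> B \<in> cliques V adj"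
  by (auto simp: linked_def cliques_of_def)

text \<open>Three pairwise adjacent vertices lie in a common clique, which would be a third clique
  of one of them.\<close>

lemma linked_triangle_free: "linked A B \<Longrightarrow> linked B C \<Longrightarrow> linked A C \<Longrightarrow> False"
proof -
  assume "linked A B" "linked B C" "linked A C"
  then obtain u w y where u: "u \<in> V" "cliques_of V adj u = {A, B}"
    and w: "w \<in> V" "cliques_of V adj w = {B, C}" and y: "y \<in> V" "cliques_of V adj y = {A, C}"
    and ne: "A \<noteq> B" "B \<noteq> C" "A \<noteq> C"
    by (auto simp: linked_def)
  then have "u \<noteq> w" "w \<noteq> y" "u \<noteq> y"
    by (auto simp: doubleton_eq_iff)
  then have "adj u w" "adj w y" "adj u y"
    using u w y adj_iff_common_clique by auto
  from triangle_common_clique[OF u(1) w(1) y(1) this] show False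
    using u w y ne by auto
qed

text \<open>A walk in V - K, which exists as K does not separate the atom, moves from clique to clique
  along links avoiding K.\<close>

lemma linked_cliques_of_avoiding:
  assumes "z \<in> V" "z \<notin> K" "D \<in> cliques_of V adj z" "C \<in> cliques_of V adj z"
  shows "(\<lambda>X Y. linked X Y \<and> X \<noteq> K \<and> Y \<noteq> K)\<^sup>*\<^sup>* D C"
proof (cases "C = D")
  case False
  then have "cliques_of V adj z = {D, C}"
    using cliques_of_eq_pair assms by blast
  moreover have "C \<noteq> K" "D \<noteq> K"
    using assms by (auto simp: cliques_of_def)
  ultimately show ?thesis
    using assms(1) False by (auto simp: linked_def)
qed simp

lemma linked_connected_avoiding:
  assumes K: "K \<in> cliques V adj" and A: "A \<in> cliques V adj" and B: "B \<in> cliques V adj"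
    and "A \<noteq> K" and "B \<noteq> K"
  shows "(\<lambda>X Y. linked X Y \<and> X \<noteq> K \<and> Y \<noteq> K)\<^sup>*\<^sup>* A B"
proof -
  let ?R = "\<lambda>X Y. linked X Y \<and> X \<noteq> K \<and> Y \<noteq> K"
  obtain x where x: "x \<in> A" "x \<notin> K"
    using clique_not_subset[OF K A] assms(4) by blast
  obtain y where y: "y \<in> B" "y \<notin> K"
    using clique_not_subset[OF K B] assms(5) by blast
  have xV: "x \<in> V" and yV: "y \<in> V"
    using x y clique_subset[OF A] clique_subset[OF B] by auto
  have extend: "?R\<^sup>*\<^sup>* A C" if "z \<in> V" "z \<notin> K" "D \<in> cliques_of V adj z" "?R\<^sup>*\<^sup>* A D"
    "C \<in> cliques_of V adj z" for z C D
    using that(4) linked_cliques_of_avoiding[OF that(1,2,3,5)] by (rule rtranclp_trans)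
  have "\<not> clique_separator V adj K"
    using atom by (simp add: atom_def)
  then have "connected_graph (V - K) adj"
    using K xV x by (auto simp: clique_separator_def)
  then have "(\<lambda>a b. a \<in> V - K \<and> b \<in> V - K \<and> adj a b)\<^sup>*\<^sup>* x y"
    using xV x yV y by (auto simp: connected_graph_def)
  then have "\<forall>C\<in>cliques_of V adj y. ?R\<^sup>*\<^sup>* A C"
  proof (induction rule: rtranclp_induct)
    case base
    have "A \<in> cliques_of V adj x"
      using x A by (simp add: cliques_of_def)
    then show ?case
      using extend[OF xV x(2)] by blast
  next
    case (step z z')
    then have z: "z \<in> V" "z \<notin> K" and z': "z' \<in> V" "z' \<notin> K" and "adj z z'"
      by auto
    then obtain D where D: "D \<in> cliques_of V adj z" "D \<in> cliques_of V adj z'"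
      using adj_iff_common_clique by blast
    moreover have "?R\<^sup>*\<^sup>* A D"
      using step.IH D(1) by blast
    ultimately show ?case
      using extend[OF z'] by blast
  qed
  then show ?thesis
    using y B by (auto simp: cliques_of_def)
qed

lemma cliques_not_subset_pair: "\<not> cliques V adj \<subseteq> {A, B}"
proof
  assume "cliques V adj \<subseteq> {A, B}"
  then have "card (cliques V adj) \<le> card {A, B}"
    by (rule card_mono[rotated]) simp
  also have "\<dots> \<le> 2"
    by (cases "A = B") auto
  finally show False
    using four_cliques by simp
qed

lemma linked_connected:
  assumes A: "A \<in> cliques V adj" and B: "B \<in> cliques V adj"
  shows "linked\<^sup>*\<^sup>* A B"
proof -
  obtain K where "K \<in> cliques V adj" "K \<noteq> A" "K \<noteq> B"
    using cliques_not_subset_pair[of A B] by blast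
  then have "(\<lambda>X Y. linked X Y \<and> X \<noteq> K \<and> Y \<noteq> K)\<^sup>*\<^sup>* A B"
    using linked_connected_avoiding A B by auto
  then show ?thesis
    by (rule rtranclp_mono[THEN predicate2D, rotated]) auto
qed

text \<open>An ear leaves N along a link a--z; as a does not separate, z reaches the rest of N
  avoiding a, and the ear ends at the first return to N.\<close>

lemma linked_ear:
  assumes N: "N \<subseteq> cliques V adj" and "a0 \<in> N" "b0 \<in> N" "a0 \<noteq> b0"
    and "N \<noteq> cliques V adj"
  obtains a b ds where "a \<in> N" "b \<in> N" "a \<noteq> b" "ds \<noteq> []" "set ds \<inter> N = {}"
    "set ds \<subseteq> cliques V adj" "distinct (a # ds @ [b])" "successively linked (a # ds @ [b])"
proof -
  obtain z0 where z0: "z0 \<in> cliques V adj" "z0 \<notin> N"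
    using N assms(5) by blast
  then have "linked\<^sup>*\<^sup>* z0 a0"
    using linked_connected N assms(2) by blast
  then obtain z a where za: "linked z a" "z \<notin> N" "a \<in> N"
    using rtranclp_cross_boundary[OF _ z0(2) assms(2)] by blast
  have z: "z \<in> cliques V adj" and a: "a \<in> cliques V adj"
    using linked_cliques[OF za(1)] by auto
  obtain b' where b': "b' \<in> N" "b' \<noteq> a"
    using assms(2-4) by metis
  let ?R = "\<lambda>X Y. linked X Y \<and> X \<noteq> a \<and> Y \<noteq> a"
  have "?R\<^sup>*\<^sup>* z b'"
    using linked_connected_avoiding[OF a z] b' N za by auto
  then obtain xs where "rtrancl_path ?R z xs b'"
    by (auto simp: rtranclp_eq_rtrancl_path)
  then obtain xs' where path: "rtrancl_path ?R z xs' b'" "distinct (z # xs')"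
    by (rule rtrancl_path_distinct)
  define L where "L = z # xs'"
  have walk: "successively ?R L" and "last L = b'"
    using rtrancl_path_successively[OF path(1)] by (auto simp: L_def)
  have "y \<in> cliques V adj \<and> y \<noteq> a" if "y \<in> set xs'" for y
    using rtrancl_path_Range[OF path(1) that] linked_cliques by blast
  then have L_sub: "set L \<subseteq> cliques V adj - {a}"
    using z za by (auto simp: L_def linked_def)
  have "b' \<in> set L"
    using \<open>last L = b'\<close> last_in_set[of L] by (simp add: L_def)
  then obtain ys t zs where split: "L = ys @ t # zs" "t \<in> N" "\<forall>y\<in>set ys. y \<notin> N"
    using split_list_first_prop[of L "\<lambda>y. y \<in> N"] b'(1) by blast
  have ys: "ys \<noteq> []" "hd ys = z"
    using split za(2) by (cases ys; auto simp: L_def)+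
  have "successively ?R (ys @ [t])"
    using walk split(1) successively_append_iff[of ?R "ys @ [t]" zs] by simp
  then have "successively linked (ys @ [t])"
    by (rule successively_mono) simp
  then have "successively linked (a # ys @ [t])"
    using ys za(1) linked_sym by (cases ys) auto
  moreover have "distinct (a # ys @ [t])"
    using path(2) L_sub split(1) by (auto simp: L_def[symmetric])
  moreover have "set ys \<subseteq> cliques V adj" "set ys \<inter> N = {}"
    using L_sub split by auto
  ultimately show ?thesis
    using that[of a t ys] za(3) split(2) ys(1) by simp
qed

definition linked_ears :: "'a set list list \<Rightarrow> bool" where
  "linked_ears es \<longleftrightarrow> (\<forall>ns\<in>set es. successively linked ns \<and> set ns \<subseteq> cliques V adj)"

lemma linked_ears_nodes: "linked_ears es \<Longrightarrow> ear_nodes es \<subseteq> cliques V adj"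
  by (auto simp: linked_ears_def ear_nodes_def)

lemma linked_ears_edges: "linked_ears es \<Longrightarrow> e \<in> ear_edges es \<Longrightarrow> \<exists>v\<in>V. cliques_of V adj v = e"
  by (fastforce simp: linked_ears_def ear_edges_def linked_def dest: successively_path_edges)

lemma linked_closed_cycle_exists:
  obtains c where "closed_cycle c" "successively linked c" "set c \<subseteq> cliques V adj"
proof -
  have "2 \<le> card (cliques V adj)"
    using four_cliques by simp
  then obtain A B where "A \<in> cliques V adj" "B \<in> cliques V adj" "A \<noteq> B"
    by (metis card_le_Suc0_iff_eq not_less_eq_eq numeral_2_eq_2 card.infinite zero_le)
  then have "linked\<^sup>*\<^sup>* A B" "A \<noteq> B"
    using linked_connected by auto
  then obtain u v where uv: "linked u v"
    by (cases rule: converse_rtranclpE) auto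
  then have uv_cliques: "{u, v} \<subseteq> cliques V adj" "u \<noteq> v"
    using linked_cliques by (auto simp: linked_def)
  have ne: "{u, v} \<noteq> cliques V adj"
    using cliques_not_subset_pair[of u v] by blast
  obtain a b ds where ear: "a \<in> {u, v}" "b \<in> {u, v}" "a \<noteq> b" "ds \<noteq> []"
    "set ds \<inter> {u, v} = {}" "set ds \<subseteq> cliques V adj" "distinct (a # ds @ [b])"
    "successively linked (a # ds @ [b])"
    by (rule linked_ear[of "{u, v}" u v]) (use uv_cliques ne in auto)
  have ba: "linked b a"
    using ear(1-3) uv linked_sym by auto
  have "length ds \<noteq> 1"
  proof
    assume "length ds = 1"
    then obtain d where "ds = [d]"
      by (auto simp: length_Suc_conv)
    then show False
      using ear(8) ba linked_triangle_free linked_sym by auto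
  qed
  then have "4 \<le> length (a # ds @ [b])"
    using ear(4) by (cases ds) (auto simp: Suc_le_eq)
  then have "closed_cycle ((a # ds @ [b]) @ [a])"
    using ear(7) unfolding closed_cycle_def by fastforce
  moreover have "successively linked ((a # ds @ [b]) @ [a])"
    using ear(8) ba successively_append_iff[of linked "a # ds @ [b]" "[a]"] by simp
  moreover have "set ((a # ds @ [b]) @ [a]) \<subseteq> cliques V adj"
    using ear(1,2,6) uv_cliques by auto
  ultimately show ?thesis
    using that by blast
qed

lemma path_edge_split_oriented:
  assumes "{a, b} \<in> path_edges ns" and "successively linked (a # ds @ [b])"
  obtains ys x y zs dd where "ns = ys @ x # y # zs" "dd = ds \<or> dd = rev ds"
    "successively linked (x # dd @ [y])"
proof -
  obtain ys zs where "ns = ys @ a # b # zs \<or> ns = ys @ b # a # zs"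
    using path_edges_split[OF assms(1)] by blast
  moreover have "successively linked (b # rev ds @ [a])"
  proof -
    have "successively (\<lambda>x y. linked y x) (a # ds @ [b])"
      using assms(2) by (rule successively_mono) (simp add: linked_sym)
    then show ?thesis
      using successively_rev[of linked "a # ds @ [b]"] by simp
  qed
  ultimately show ?thesis
    using that assms(2) by blast
qed

lemma linked_ears_subdivide:
  assumes es: "ear_decomposition es" "linked_ears es" and ab: "{a, b} \<in> ear_edges es"
    and ds: "ds \<noteq> []" "set ds \<inter> ear_nodes es = {}" "set ds \<subseteq> cliques V adj"
      "distinct (a # ds @ [b])" "successively linked (a # ds @ [b])"
  obtains es' where "ear_decomposition es'" "linked_ears es'" "ear_nodes es' = ear_nodes es \<union> set ds"
proof -
  obtain j where j: "j < length es" "{a, b} \<in> path_edges (es ! j)"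
    using ab by (auto simp: ear_edges_def in_set_conv_nth)
  then obtain ys x y zs dd where split: "es ! j = ys @ x # y # zs" "dd = ds \<or> dd = rev ds"
    "successively linked (x # dd @ [y])"
    using path_edge_split_oriented ds(5) by metis
  let ?new = "ys @ x # dd @ y # zs"
  have dd: "dd \<noteq> []" "distinct dd" "set dd = set ds"
    using split(2) ds(1,4) by auto
  have new: "set ?new = set (es ! j) \<union> set ds"
    using split(1) dd(3) by auto
  have "successively linked (es ! j)" "set (es ! j) \<subseteq> cliques V adj"
    using es(2) j(1) by (auto simp: linked_ears_def)
  then have new_linked: "successively linked ?new" "set ?new \<subseteq> cliques V adj"
    using successively_subdivide[OF _ split(3)] split(1) new ds(3) by auto
  have "ear_decomposition (es[j := ?new])"
    using ear_decomposition_subdivide[OF es(1) j(1) split(1) dd(1,2)] dd(3) ds(2) by simp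
  moreover have "linked_ears (es[j := ?new])"
    using es(2) new_linked
    by (auto simp: linked_ears_def dest!: set_update_subset_insert[THEN subsetD])
  moreover have "ear_nodes (es[j := ?new]) = ear_nodes es \<union> set ds"
    using new by (rule ear_nodes_update[OF j(1)])
  ultimately show ?thesis
    using that by blast
qed

lemma linked_ears_extend:
  assumes es: "ear_decomposition es" "linked_ears es" and incomplete: "ear_nodes es \<noteq> cliques V adj"
  obtains es' where "ear_decomposition es'" "linked_ears es'" "ear_nodes es \<subset> ear_nodes es'"
proof -
  obtain a0 b0 where "a0 \<in> ear_nodes es" "b0 \<in> ear_nodes es" "a0 \<noteq> b0"
    using ear_decomposition_two_nodes[OF es(1)] by blast
  then obtain a b ds where ear: "a \<in> ear_nodes es" "b \<in> ear_nodes es" "a \<noteq> b" "ds \<noteq> []"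
    "set ds \<inter> ear_nodes es = {}" "set ds \<subseteq> cliques V adj" "distinct (a # ds @ [b])"
    "successively linked (a # ds @ [b])"
    using linked_ear[OF linked_ears_nodes[OF es(2)] _ _ _ incomplete] by metis
  have grow: "ear_nodes es \<subset> ear_nodes es \<union> set ds"
    using ear(4,5) by (cases ds) auto
  show ?thesis
  proof (cases "{a, b} \<in> ear_edges es")
    case False
    let ?es' = "es @ [a # ds @ [b]]"
    have "is_ear es (a # ds @ [b])"
      using ear False by (auto simp: is_ear_def Suc_le_eq)
    with es(1) have "ear_decomposition ?es'"
      by (rule ear_decomposition.ear)
    moreover have "linked_ears ?es'"
      using es(2) ear(1,2,6,8) linked_ears_nodes[OF es(2)] by (auto simp: linked_ears_def)
    moreover have "ear_nodes ?es' = ear_nodes es \<union> set ds"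
      using ear(1,2) by auto
    ultimately show ?thesis
      using that grow by metis
  next
    case True
    then show ?thesis
      using linked_ears_subdivide[OF es True ear(4-8)] that grow by metis
  qed
qed

lemma linked_ear_decomposition_exists:
  obtains es where "ear_decomposition es" "linked_ears es" "ear_nodes es = cliques V adj"
proof -
  let ?Q = "\<lambda>n. \<exists>es. ear_decomposition es \<and> linked_ears es \<and> card (ear_nodes es) = n"
  obtain c where "closed_cycle c" "successively linked c" "set c \<subseteq> cliques V adj"
    by (rule linked_closed_cycle_exists)
  then have "ear_decomposition [c]" "linked_ears [c]"
    by (auto intro: ear_decomposition.cycle simp: linked_ears_def)
  then have start: "?Q (card (ear_nodes [c]))"
    by blast
  have bound: "\<forall>n. ?Q n \<longrightarrow> n \<le> card (cliques V adj)"
    using linked_ears_nodes finite_cliques_V card_mono by blast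
  obtain n where n: "?Q n" "\<forall>m. ?Q m \<longrightarrow> m \<le> n"
    using Nat.ex_has_greatest_nat[OF start bound] by blast
  then obtain es where es: "ear_decomposition es" "linked_ears es" "card (ear_nodes es) = n"
    by blast
  show ?thesis
  proof (cases "ear_nodes es = cliques V adj")
    case False
    then obtain es' where es': "ear_decomposition es'" "linked_ears es'"
      "ear_nodes es \<subset> ear_nodes es'"
      using linked_ears_extend es(1,2) by blast
    then have "n < card (ear_nodes es')"
      using es(3) linked_ears_nodes[OF es'(2)] finite_cliques_V
      by (metis psubset_card_mono finite_subset)
    then show ?thesis
      using n(2) es'(1,2) by fastforce
  qed (use es that in blast)
qed

end

section \<open>Gates from ear decompositions\<close>

context clique_degree_two_atom
begin

definition link_vertex :: "'a set set \<Rightarrow> 'a" where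
  "link_vertex e = (SOME v. v \<in> V \<and> cliques_of V adj v = e)"

lemma link_vertex:
  "\<exists>v\<in>V. cliques_of V adj v = e \<Longrightarrow> link_vertex e \<in> V \<and> cliques_of V adj (link_vertex e) = e"
  unfolding link_vertex_def by (rule someI_ex) blast

lemma link_vertex_eq_iff:
  assumes "\<exists>v\<in>V. cliques_of V adj v = e" and "\<exists>v\<in>V. cliques_of V adj v = f"
  shows "link_vertex e = link_vertex f \<longleftrightarrow> e = f"
  using link_vertex[OF assms(1)] link_vertex[OF assms(2)] by metis

definition link_star :: "'a set set set \<Rightarrow> 'a set \<Rightarrow> 'a set" where
  "link_star E A = {v \<in> link_vertex ` E. A \<in> cliques_of V adj v}"

context
  fixes E :: "'a set set set"
  assumes realized: "\<forall>e\<in>E. \<exists>v\<in>V. cliques_of V adj v = e"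
    and two_edges: "\<forall>A\<in>\<Union>E. \<exists>e1\<in>E. \<exists>e2\<in>E. e1 \<noteq> e2 \<and> A \<in> e1 \<and> A \<in> e2"
begin

lemma link_vertices_subset: "link_vertex ` E \<subseteq> V"
  using realized link_vertex by blast

lemma cliques_of_link_vertex:
  "v \<in> link_vertex ` E \<Longrightarrow> cliques_of V adj v \<in> E \<and> link_vertex (cliques_of V adj v) = v"
  using realized link_vertex by auto

lemma link_star_two:
  assumes "A \<in> \<Union>E"
  obtains u w where "u \<in> link_star E A" "w \<in> link_star E A" "u \<noteq> w"
proof -
  obtain e1 e2 where e: "e1 \<in> E" "e2 \<in> E" "e1 \<noteq> e2" "A \<in> e1" "A \<in> e2"
    using two_edges assms by blast
  then have "link_vertex e1 \<in> link_star E A" "link_vertex e2 \<in> link_star E A"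
    "link_vertex e1 \<noteq> link_vertex e2"
    using realized link_vertex link_vertex_eq_iff by (auto simp: link_star_def)
  then show ?thesis
    using that by blast
qed

text \<open>Otherwise the clique shared by y, u and w would be a second clique common to u and w,
  and u, w would represent the same edge.\<close>

lemma link_star_maximal:
  assumes A: "A \<in> \<Union>E" and u: "u \<in> link_star E A" and w: "w \<in> link_star E A" and "u \<noteq> w"
    and y: "y \<in> link_vertex ` E" "adj y u" "adj y w"
  shows "y \<in> link_star E A"
proof (rule ccontr)
  assume y_out: "y \<notin> link_star E A"
  have V: "y \<in> V" "u \<in> V" "w \<in> V"
    using u w y link_vertices_subset by (auto simp: link_star_def)
  have "adj u w"
    using u w \<open>u \<noteq> w\<close> adj_iff_common_clique[OF V(2,3)] by (auto simp: link_star_def)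
  then obtain C where C: "C \<in> cliques_of V adj y" "C \<in> cliques_of V adj u" "C \<in> cliques_of V adj w"
    using triangle_common_clique[OF V y(2) _ y(3)] by blast
  have "A \<noteq> C"
    using C(1) y_out y(1) by (auto simp: link_star_def)
  moreover have "u \<in> link_vertex ` E" "A \<in> cliques_of V adj u"
    "w \<in> link_vertex ` E" "A \<in> cliques_of V adj w"
    using u w by (auto simp: link_star_def)
  ultimately have "cliques_of V adj u = {A, C}" "cliques_of V adj w = {A, C}"
    using cliques_of_eq_pair V(2,3) C(2,3) by blast+
  then show False
    using cliques_of_link_vertex \<open>u \<in> link_vertex ` E\<close> \<open>w \<in> link_vertex ` E\<close> \<open>u \<noteq> w\<close>
    by metis
qed

lemma link_star_clique:
  assumes A: "A \<in> \<Union>E"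
  shows "link_star E A \<in> cliques (link_vertex ` E) adj"
proof -
  have complete: "complete_set (link_vertex ` E) adj (link_star E A)"
    unfolding complete_set_def
  proof (intro conjI ballI impI)
    show "link_star E A \<subseteq> link_vertex ` E"
      by (auto simp: link_star_def)
    fix x y assume xy: "x \<in> link_star E A" "y \<in> link_star E A" "x \<noteq> y"
    then have "x \<in> V" "y \<in> V"
      using link_vertices_subset by (auto simp: link_star_def)
    with xy show "adj x y"
      using adj_iff_common_clique by (auto simp: link_star_def)
  qed
  obtain u w where uw: "u \<in> link_star E A" "w \<in> link_star E A" "u \<noteq> w"
    using link_star_two[OF A] .
  have "K = link_star E A" if "complete_set (link_vertex ` E) adj K" "link_star E A \<subseteq> K" for K
  proof
    show "K \<subseteq> link_star E A"
    proof
      fix y assume y: "y \<in> K"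
      show "y \<in> link_star E A"
      proof (cases "y = u \<or> y = w")
        case False
        have "u \<in> K" "w \<in> K"
          using uw that(2) by auto
        then have "adj y u" "adj y w" "y \<in> link_vertex ` E"
          using y False that(1) by (auto simp: complete_set_def)
        then show ?thesis
          using link_star_maximal[OF A uw] by blast
      qed (use uw in auto)
    qed
  qed (use that in simp)
  then show ?thesis
    using complete by (auto simp: cliques_def)
qed

lemma clique_is_link_star:
  assumes K: "K \<in> cliques (link_vertex ` E) adj" and "E \<noteq> {}"
  obtains A where "A \<in> \<Union>E" "K = link_star E A"
proof -
  have "K \<noteq> {}"
    using clique_nonempty[OF K] assms(2) by blast
  then obtain x where x: "x \<in> K"
    by blast
  have K_complete: "complete_set (link_vertex ` E) adj K"
    using K by (simp add: cliques_def)
  then have "complete_set V adj K"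
    using link_vertices_subset by (auto simp: complete_set_def)
  then obtain L where L: "L \<in> cliques V adj" "K \<subseteq> L"
    using complete_set_subset_clique[OF finite_V] by blast
  have x_link: "x \<in> link_vertex ` E"
    using x K_complete by (auto simp: complete_set_def)
  have "L \<in> cliques_of V adj x"
    using L x by (auto simp: cliques_of_def)
  then have "L \<in> \<Union>E"
    using cliques_of_link_vertex[OF x_link] by blast
  moreover have "K \<subseteq> link_star E L"
    using L K_complete by (auto simp: link_star_def cliques_of_def complete_set_def)
  then have "K = link_star E L"
    using K link_star_clique[OF \<open>L \<in> \<Union>E\<close>] by (auto simp: cliques_def)
  ultimately show ?thesis
    using that by blast
qed

lemma inj_on_link_star: "inj_on (link_star E) (\<Union>E)"
proof
  fix A B assume A: "A \<in> \<Union>E" and "B \<in> \<Union>E" and eq: "link_star E A = link_star E B"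
  show "A = B"
  proof (rule ccontr)
    assume "A \<noteq> B"
    obtain u w where uw: "u \<in> link_star E A" "w \<in> link_star E A" "u \<noteq> w"
      using link_star_two[OF A] .
    then have uw_link: "u \<in> link_vertex ` E" "w \<in> link_vertex ` E"
      and "A \<in> cliques_of V adj u" "B \<in> cliques_of V adj u"
      and "A \<in> cliques_of V adj w" "B \<in> cliques_of V adj w"
      using eq by (auto simp: link_star_def)
    moreover have "u \<in> V" "w \<in> V"
      using uw_link link_vertices_subset by auto
    ultimately have "cliques_of V adj u = {A, B}" "cliques_of V adj w = {A, B}"
      using cliques_of_eq_pair \<open>A \<noteq> B\<close> by blast+
    then show False
      using cliques_of_link_vertex uw_link uw(3) by metis
  qed
qed

lemma cliques_link_vertices:
  assumes "E \<noteq> {}"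
  shows "cliques (link_vertex ` E) adj = link_star E ` \<Union>E"
  using link_star_clique clique_is_link_star[OF _ assms] by blast

end

lemma link_vertex_ear_edge:
  "linked_ears es \<Longrightarrow> e \<in> ear_edges es \<Longrightarrow>
    link_vertex e \<in> V \<and> cliques_of V adj (link_vertex e) = e"
  using linked_ears_edges link_vertex by blast

lemma ear_decomposition_link_cliques:
  assumes es: "ear_decomposition es" "linked_ears es"
  shows "cliques (link_vertex ` ear_edges es) adj = link_star (ear_edges es) ` ear_nodes es"
    and "inj_on (link_star (ear_edges es)) (ear_nodes es)"
proof -
  have realized: "\<forall>e\<in>ear_edges es. \<exists>v\<in>V. cliques_of V adj v = e"
    using linked_ears_edges[OF es(2)] by blast
  have cover: "\<Union> (ear_edges es) = ear_nodes es"
    using ear_decomposition_edges_cover[OF es(1)] .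
  then have two: "\<forall>A\<in>\<Union> (ear_edges es). \<exists>e1\<in>ear_edges es. \<exists>e2\<in>ear_edges es.
      e1 \<noteq> e2 \<and> A \<in> e1 \<and> A \<in> e2"
    using ear_decomposition_node_two_edges[OF es(1)] by simp
  have "ear_edges es \<noteq> {}"
    using ear_decomposition_two_nodes[OF es(1)] cover by auto
  then show "cliques (link_vertex ` ear_edges es) adj = link_star (ear_edges es) ` ear_nodes es"
    using cliques_link_vertices[OF realized two] cover by simp
  show "inj_on (link_star (ear_edges es)) (ear_nodes es)"
    using inj_on_link_star[OF realized two] cover by simp
qed

definition link_cycle :: "'a set list \<Rightarrow> 'a list" where
  "link_cycle cs = map (\<lambda>i. link_vertex (cycle_edge cs i)) [0..<length cs]"

context
  fixes cs :: "'a set list"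
  assumes cs: "distinct cs" "4 \<le> length cs"
    and realized: "\<forall>i<length cs. \<exists>v\<in>V. cliques_of V adj v = cycle_edge cs i"
begin

lemma length_link_cycle: "length (link_cycle cs) = length cs"
  by (simp add: link_cycle_def)

lemma link_cycle_nth:
  assumes "i < length cs"
  shows "link_cycle cs ! i \<in> V" "cliques_of V adj (link_cycle cs ! i) = cycle_edge cs i"
  using assms link_vertex realized by (auto simp: link_cycle_def)

lemma link_cycle_eq_iff:
  assumes "p < length cs" and "q < length cs"
  shows "link_cycle cs ! p = link_cycle cs ! q \<longleftrightarrow> p = q"
proof
  assume "link_cycle cs ! p = link_cycle cs ! q"
  then have "cycle_edge cs p = cycle_edge cs q"
    using link_cycle_nth(2) assms by metis
  then show "p = q"
    using cycle_edge_eq_iff[OF cs(1) _ assms] cs(2) by simp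
qed simp

lemma distinct_link_cycle: "distinct (link_cycle cs)"
  using link_cycle_eq_iff by (simp add: distinct_conv_nth length_link_cycle)

lemma link_cycle_adj_iff:
  assumes pq: "p < length cs" "q < length cs"
  shows "adj (link_cycle cs ! p) (link_cycle cs ! q)
    \<longleftrightarrow> cycle_adj (link_cycle cs) (link_cycle cs ! p) (link_cycle cs ! q)"
proof -
  let ?n = "length cs"
  have "adj (link_cycle cs ! p) (link_cycle cs ! q)
      \<longleftrightarrow> p \<noteq> q \<and> cycle_edge cs p \<inter> cycle_edge cs q \<noteq> {}"
    using adj_iff_common_clique link_cycle_nth link_cycle_eq_iff pq by simp
  also have "\<dots> \<longleftrightarrow> q = Suc p mod ?n \<or> p = Suc q mod ?n"
  proof (cases "p = q")
    case True
    then show ?thesis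
      using pq cs(2) by (auto simp: Suc_mod_if)
  next
    case False
    then show ?thesis
      using cycle_edges_meet_iff[OF cs(1) _ pq] cs(2) by simp
  qed
  finally show ?thesis
    using cycle_adj_nth_iff[OF distinct_link_cycle] pq by (simp add: length_link_cycle)
qed

lemma gate_link_cycle: "gate (set (link_cycle cs)) adj"
proof (rule gate.cycle[OF distinct_link_cycle])
  show "4 \<le> length (link_cycle cs)"
    using cs(2) by (simp add: length_link_cycle)
  show "\<forall>x\<in>set (link_cycle cs). \<forall>y\<in>set (link_cycle cs). adj x y \<longleftrightarrow> cycle_adj (link_cycle cs) x y"
    using link_cycle_adj_iff by (auto simp: in_set_conv_nth length_link_cycle)
qed simp

end

lemma gate_closed_cycle:
  assumes "closed_cycle c" and "linked_ears [c]"
  shows "gate (link_vertex ` ear_edges [c]) adj"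
proof -
  obtain cs where cs: "c = cs @ [hd cs]" "distinct cs" "4 \<le> length cs"
    using assms(1) by (auto simp: closed_cycle_def)
  then have "cs \<noteq> []"
    by (cases cs) auto
  then have edges: "ear_edges [c] = cycle_edge cs ` {..<length cs}"
    using path_edges_closed_cycle cs(1) by simp
  then have "\<forall>i<length cs. \<exists>v\<in>V. cliques_of V adj v = cycle_edge cs i"
    using linked_ears_edges[OF assms(2)] by auto
  moreover have "link_vertex ` ear_edges [c] = set (link_cycle cs)"
    unfolding edges by (auto simp: link_cycle_def)
  ultimately show ?thesis
    using gate_link_cycle[OF cs(2,3)] by simp
qed

definition link_path :: "'a set list \<Rightarrow> 'a list" where
  "link_path ns = map (\<lambda>i. link_vertex {ns ! i, ns ! Suc i}) [0..<length ns - 1]"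

context
  fixes es :: "'a set list list" and ns :: "'a set list"
  assumes ear: "is_ear es ns" and ears: "linked_ears (es @ [ns])"
begin

lemma length_link_path: "length (link_path ns) = length ns - 1"
  by (simp add: link_path_def)

lemma link_path_nth:
  assumes "i < length ns - 1"
  shows "link_path ns ! i \<in> V" "cliques_of V adj (link_path ns ! i) = {ns ! i, ns ! Suc i}"
proof -
  have "{ns ! i, ns ! Suc i} \<in> ear_edges (es @ [ns])"
    using assms by (auto simp: path_edges_def)
  then show "link_path ns ! i \<in> V" "cliques_of V adj (link_path ns ! i) = {ns ! i, ns ! Suc i}"
    using link_vertex_ear_edge[OF ears] assms by (auto simp: link_path_def)
qed

lemma link_path_eq_iff:
  assumes "p < length ns - 1" and "q < length ns - 1"
  shows "link_path ns ! p = link_path ns ! q \<longleftrightarrow> p = q"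
proof
  assume "link_path ns ! p = link_path ns ! q"
  then have "{ns ! p, ns ! Suc p} = {ns ! q, ns ! Suc q}"
    using link_path_nth assms by metis
  then show "p = q"
    using distinct_path_edge_eq_iff[of ns p q] ear assms by (auto simp: is_ear_def)
qed simp

lemma distinct_link_path: "distinct (link_path ns)"
  using link_path_eq_iff by (simp add: distinct_conv_nth length_link_path)

lemma link_path_adj_iff:
  assumes pq: "p < length ns - 1" "q < length ns - 1"
  shows "adj (link_path ns ! p) (link_path ns ! q)
    \<longleftrightarrow> list_adj (link_path ns) (link_path ns ! p) (link_path ns ! q)"
proof -
  have "adj (link_path ns ! p) (link_path ns ! q)
      \<longleftrightarrow> p \<noteq> q \<and> {ns ! p, ns ! Suc p} \<inter> {ns ! q, ns ! Suc q} \<noteq> {}"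
    using adj_iff_common_clique link_path_nth link_path_eq_iff pq by simp
  also have "\<dots> \<longleftrightarrow> q = Suc p \<or> p = Suc q"
    using distinct_path_edges_meet_iff[of ns p q] ear pq by (auto simp: is_ear_def)
  finally show ?thesis
    using list_adj_nth_iff[OF distinct_link_path] pq by (simp add: length_link_path)
qed

lemma ear_node_iff:
  assumes i: "i < length ns"
  shows "ns ! i \<in> ear_nodes es \<longleftrightarrow> i = 0 \<or> i = length ns - 1"
proof -
  have ns: "distinct ns" "ns \<noteq> []" "hd ns \<in> ear_nodes es" "last ns \<in> ear_nodes es"
    "set ns \<inter> ear_nodes es \<subseteq> {hd ns, last ns}"
    using ear by (auto simp: is_ear_def)
  have ends: "hd ns = ns ! 0" "last ns = ns ! (length ns - 1)"
    using ns(2) by (simp_all add: hd_conv_nth last_conv_nth)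
  have "ns ! i \<in> ear_nodes es \<longleftrightarrow> ns ! i \<in> {hd ns, last ns}"
  proof
    assume "ns ! i \<in> ear_nodes es"
    then show "ns ! i \<in> {hd ns, last ns}"
      by (intro subsetD[OF ns(5)] IntI nth_mem[OF i])
  next
    assume "ns ! i \<in> {hd ns, last ns}"
    then have "ns ! i = hd ns \<or> ns ! i = last ns"
      by simp
    then show "ns ! i \<in> ear_nodes es"
      using ns(3,4) by (elim disjE) simp_all
  qed
  also have "\<dots> \<longleftrightarrow> i = 0 \<or> i = length ns - 1"
    unfolding ends using i ns(1,2) by (simp add: nth_eq_iff_index_eq)
  finally show ?thesis .
qed

lemma link_path_attach:
  assumes p: "p < length ns - 1" and y: "y \<in> link_vertex ` ear_edges es"
  shows "adj (link_path ns ! p) y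
    \<longleftrightarrow> p = 0 \<and> hd ns \<in> cliques_of V adj y \<or> Suc p = length ns - 1 \<and> last ns \<in> cliques_of V adj y"
proof -
  obtain e where e: "e \<in> ear_edges es" "y = link_vertex e"
    using y by blast
  have es: "linked_ears es"
    using ears by (simp add: linked_ears_def)
  have y_V: "y \<in> V" and y_nodes: "cliques_of V adj y \<subseteq> ear_nodes es"
    using link_vertex_ear_edge[OF es e(1)] e path_edge_subset by (auto simp: ear_edges_def ear_nodes_def)
  have "ns ! p \<notin> ear_nodes es \<or> ns ! Suc p \<notin> ear_nodes es"
    using ear_node_iff p ear by (auto simp: is_ear_def)
  then have "cliques_of V adj (link_path ns ! p) \<noteq> cliques_of V adj y"
    using link_path_nth[OF p] y_nodes by auto
  then have "adj (link_path ns ! p) y \<longleftrightarrow> {ns ! p, ns ! Suc p} \<inter> cliques_of V adj y \<noteq> {}"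
    using adj_iff_common_clique[OF link_path_nth(1)[OF p] y_V] link_path_nth(2)[OF p] by auto
  also have "\<dots> \<longleftrightarrow> p = 0 \<and> ns ! 0 \<in> cliques_of V adj y
      \<or> Suc p = length ns - 1 \<and> ns ! (length ns - 1) \<in> cliques_of V adj y"
  proof -
    have "ns ! p \<in> cliques_of V adj y \<Longrightarrow> p = 0" "ns ! Suc p \<in> cliques_of V adj y \<Longrightarrow> Suc p = length ns - 1"
      using ear_node_iff[of p] ear_node_iff[of "Suc p"] p y_nodes by auto
    then show ?thesis
      by auto
  qed
  moreover have "ns \<noteq> []"
    using ear by (cases ns) (auto simp: is_ear_def)
  then have "hd ns = ns ! 0" "last ns = ns ! (length ns - 1)"
    by (simp_all add: hd_conv_nth last_conv_nth)
  ultimately show ?thesis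
    by simp
qed

lemma link_path_disjoint: "set (link_path ns) \<inter> link_vertex ` ear_edges es = {}"
proof -
  have es: "linked_ears es"
    using ears by (simp add: linked_ears_def)
  have "link_path ns ! p \<noteq> link_vertex e" if p: "p < length ns - 1" and e: "e \<in> ear_edges es" for p e
  proof
    assume "link_path ns ! p = link_vertex e"
    then have "{ns ! p, ns ! Suc p} \<subseteq> ear_nodes es"
      using link_path_nth(2)[OF p] link_vertex_ear_edge[OF es e] e path_edge_subset
      by (auto simp: ear_edges_def ear_nodes_def)
    then show False
      using ear_node_iff[of p] ear_node_iff[of "Suc p"] p ear by (auto simp: is_ear_def)
  qed
  then show ?thesis
    by (auto simp: in_set_conv_nth length_link_path)
qed

lemma link_vertices_add_ear:
  "link_vertex ` ear_edges (es @ [ns]) = link_vertex ` ear_edges es \<union> set (link_path ns)"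
proof -
  have "path_edges ns = (\<lambda>i. {ns ! i, ns ! Suc i}) ` {0..<length ns - 1}"
    by (auto simp: path_edges_def)
  then show ?thesis
    by (simp add: link_path_def image_image image_Un)
qed

lemma adj_link_path_iff:
  assumes x: "x \<in> set (link_path ns)" and y: "y \<in> link_vertex ` ear_edges es \<union> set (link_path ns)"
  shows "adj x y \<longleftrightarrow> list_adj (link_path ns) x y
    \<or> x = hd (link_path ns) \<and> y \<in> link_star (ear_edges es) (hd ns)
    \<or> x = last (link_path ns) \<and> y \<in> link_star (ear_edges es) (last ns)"
proof -
  let ?ps = "link_path ns"
  obtain p where p: "p < length ns - 1" "x = ?ps ! p"
    using x by (auto simp: in_set_conv_nth length_link_path)
  have len: "length ?ps = length ns - 1"
    by (rule length_link_path)
  then have "?ps \<noteq> []"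
    using p(1) by auto
  then have ps: "hd ?ps = ?ps ! 0" "last ?ps = ?ps ! (length ns - 2)"
    using len by (simp_all add: hd_conv_nth last_conv_nth numeral_2_eq_2)
  have stars: "link_star (ear_edges es) A \<subseteq> link_vertex ` ear_edges es" for A
    by (auto simp: link_star_def)
  show ?thesis
  proof (cases "y \<in> set ?ps")
    case True
    then obtain q where "q < length ns - 1" "y = ?ps ! q"
      by (auto simp: in_set_conv_nth length_link_path)
    then show ?thesis
      using link_path_adj_iff[OF p(1)] link_path_disjoint stars True p(2) by blast
  next
    case False
    then have "y \<in> link_vertex ` ear_edges es" "\<not> list_adj ?ps x y"
      using y False list_adj_in_set[of ?ps x y] by auto
    moreover have "x = hd ?ps \<longleftrightarrow> p = 0" "x = last ?ps \<longleftrightarrow> Suc p = length ns - 1"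
      using p ps link_path_eq_iff by auto
    ultimately show ?thesis
      using link_path_attach[OF p(1)] p(2) by (auto simp: link_star_def)
  qed
qed

lemma adj_add_ear_iff:
  fixes x y
  defines "S \<equiv> link_vertex ` ear_edges es" and "ps \<equiv> link_path ns"
    and "C \<equiv> link_star (ear_edges es) (hd ns)" and "C' \<equiv> link_star (ear_edges es) (last ns)"
  assumes x: "x \<in> S \<union> set ps" and y: "y \<in> S \<union> set ps" and new: "x \<in> set ps \<or> y \<in> set ps"
  shows "adj x y \<longleftrightarrow> list_adj ps x y \<or> x = hd ps \<and> y \<in> C \<or> y = hd ps \<and> x \<in> C
    \<or> x = last ps \<and> y \<in> C' \<or> y = last ps \<and> x \<in> C'"
proof -
  have old: "C \<subseteq> S" "C' \<subseteq> S" "set ps \<inter> S = {}"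
    using link_path_disjoint by (auto simp: C_def C'_def S_def ps_def link_star_def)
  have "ps \<noteq> []"
    using new by auto
  then have ends: "hd ps \<in> set ps" "last ps \<in> set ps"
    by simp_all
  show ?thesis
  proof (cases "x \<in> set ps")
    case True
    then show ?thesis
      using adj_link_path_iff[of x y] y old ends unfolding S_def ps_def C_def C'_def by blast
  next
    case False
    then have y_ps: "y \<in> set ps"
      using new by simp
    have "S \<union> set ps \<subseteq> V"
      using link_vertex_ear_edge[OF ears] unfolding S_def ps_def link_vertices_add_ear[symmetric]
      by blast
    then have "x \<in> V" "y \<in> V"
      using x y by blast+
    then have "adj x y \<longleftrightarrow> adj y x"
      using graph_sym[OF graph] by blast
    moreover have "list_adj ps x y \<longleftrightarrow> list_adj ps y x"
      by (auto simp: list_adj_def insert_commute)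
    ultimately show ?thesis
      using adj_link_path_iff[of y x] x y_ps False old ends
      unfolding S_def ps_def C_def C'_def by blast
  qed
qed

lemma gate_add_ear:
  assumes gate_es: "gate (link_vertex ` ear_edges es) adj"
    and cliques_es: "cliques (link_vertex ` ear_edges es) adj = link_star (ear_edges es) ` ear_nodes es"
  shows "gate (link_vertex ` ear_edges (es @ [ns])) adj"
proof -
  let ?S = "link_vertex ` ear_edges es" and ?ps = "link_path ns"
  let ?C = "link_star (ear_edges es) (hd ns)" and ?C' = "link_star (ear_edges es) (last ns)"
  have ns: "3 \<le> length ns" "distinct ns" "hd ns \<in> ear_nodes es" "last ns \<in> ear_nodes es"
    "{hd ns, last ns} \<notin> ear_edges es"
    using ear by (auto simp: is_ear_def)
  have "hd ns \<noteq> last ns"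
    using ns(1,2) by (cases ns) (auto simp: nth_eq_iff_index_eq last_conv_nth)
  have "?C \<inter> ?C' = {}"
  proof (rule ccontr)
    assume "?C \<inter> ?C' \<noteq> {}"
    then obtain e where e: "e \<in> ear_edges es" "hd ns \<in> cliques_of V adj (link_vertex e)"
      "last ns \<in> cliques_of V adj (link_vertex e)"
      by (auto simp: link_star_def)
    have "linked_ears es"
      using ears by (simp add: linked_ears_def)
    then have "link_vertex e \<in> V" "cliques_of V adj (link_vertex e) = e"
      using link_vertex_ear_edge e(1) by blast+
    then have "e = {hd ns, last ns}"
      using cliques_of_eq_pair e(2,3) \<open>hd ns \<noteq> last ns\<close> by metis
    then show False
      using e(1) ns(5) by simp
  qed
  then have "gate (?S \<union> set ?ps) adj"
    using gate.extend[OF gate_es, of ?C ?C' ?ps] cliques_es ns(1,3,4) distinct_link_path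
      link_path_disjoint adj_add_ear_iff by (auto simp: length_link_path)
  then show ?thesis
    unfolding link_vertices_add_ear .
qed

end

lemma gate_ear_decomposition:
  "ear_decomposition es \<Longrightarrow> linked_ears es \<Longrightarrow> gate (link_vertex ` ear_edges es) adj"
proof (induction rule: ear_decomposition.induct)
  case (cycle c)
  then show ?case
    by (rule gate_closed_cycle)
next
  case (ear es ns)
  have "linked_ears es"
    using ear.prems by (simp add: linked_ears_def)
  then show ?case
    using gate_add_ear[OF ear.hyps(2) ear.prems ear.IH]
      ear_decomposition_link_cliques(1)[OF ear.hyps(1)] by blast
qed

lemma exists_k_gate: "\<exists>S\<subseteq>V. k_gate (card (cliques V adj)) S adj"
proof -
  obtain es where es: "ear_decomposition es" "linked_ears es" "ear_nodes es = cliques V adj"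
    by (rule linked_ear_decomposition_exists)
  let ?S = "link_vertex ` ear_edges es"
  have "?S \<subseteq> V"
    using link_vertex_ear_edge[OF es(2)] by blast
  moreover have "card (cliques ?S adj) = card (cliques V adj)"
    using ear_decomposition_link_cliques[OF es(1,2)] es(3) by (simp add: card_image)
  ultimately show ?thesis
    using gate_ear_decomposition[OF es(1,2)] by (auto simp: k_gate_def)
qed

end

theorem lemma11:
  fixes V :: "'a set" and adj :: "'a \<Rightarrow> 'a \<Rightarrow> bool" and k :: nat
  assumes "graph V adj"
    and "helly_ept V adj"
    and "atom V adj"
    and "card (cliques V adj) = k"
    and "4 \<le> k"
  shows "\<exists>S \<subseteq> V. k_gate k S adj"
proof -
  obtain VT :: "nat set" and adjT P where rep: "ept_rep V adj VT adjT P" "helly_rep V P"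
    using assms(2) by (auto simp: helly_ept_def)
  then interpret helly_ept_atom V adj VT adjT P
    using assms by unfold_locales auto
  interpret clique_degree_two_atom V adj
    using assms card_cliques_of_le_two by unfold_locales auto
  show ?thesis
    using exists_k_gate assms(4) by simp
qed

end
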